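(* Let $1 \leq p < \infty$ and let $\lambda, \mu, \nu, \alpha, \beta$ be real numbers. Let $$H_{\lambda,\mu,\nu} f(y) = \int_{0}^{\infty} \frac{x^{\mu} y^{\nu}}{(x+y)^{\lambda}} f(x)\, dx, \quad y > 0.$$ Then $H_{\lambda,\mu,\nu}$ is bounded from $L^p_\alpha$ to $L^p_\beta$ if and only if $$\lambda = \mu + \nu + 1 + \frac{\beta - \alpha}{p} \quad\text{and}\quad -p\nu < \beta + 1 < p(\lambda - \nu),$$ or equivalently, $$\lambda = \mu + \nu + 1 + \frac{\beta - \alpha}{p} \quad\text{and}\quad p(\mu + 1 - \lambda) < \alpha + 1 < p(\mu + 1).$$ Moreover, when $H_{\lambda,\mu,\nu}$ is bounded from $L^p_\alpha$ to $L^p_\beta$, $$\|H_{\lambda,\mu,\nu}\|_{L^p_\alpha \to L^p_\beta} = B\left(\mu + 1 - \frac{1}{p}(\alpha+1),\ \nu + \frac{1}{p}(\beta+1)\right).$$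
   Context: For $\theta\in\mathbb{R}$, $L^p_\theta$ is the space of real-valued measurable functions $f$ on $(0,\infty)$ with $\|f\|_{p,\theta} = \left(\int_0^\infty |f(x)|^p x^\theta\,dx\right)^{1/p} < \infty$. Bounded means: for every $f\in L^p_\alpha$ the defining integral converges, $H_{\lambda,\mu,\nu}f \in L^p_\beta$, and $\|H_{\lambda,\mu,\nu} f\|_{p,\beta} \le C\|f\|_{p,\alpha}$ for a constant $C$. The operator norm is $\|H_{\lambda,\mu,\nu}\|_{L^p_\alpha \to L^p_\beta} = \sup_{0\neq f \in L^p_\alpha} \|H_{\lambda,\mu,\nu} f\|_{p,\beta}/\|f\|_{p,\alpha}$. $B(x,y)=\int_0^1 t^{x-1}(1-t)^{y-1}\,dt$ is the Beta function. *)

theory Defs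
  imports "HOL-Analysis.Analysis"
begin

definition wint :: "real \<Rightarrow> real \<Rightarrow> (real \<Rightarrow> real) \<Rightarrow> ennreal" where
  "wint p \<theta> f = (\<integral>\<^sup>+ x. ennreal (indicator {0<..} x * (\<bar>f x\<bar> powr p * x powr \<theta>)) \<partial>lebesgue)"

definition in_Lpw :: "real \<Rightarrow> real \<Rightarrow> (real \<Rightarrow> real) \<Rightarrow> bool" where
  "in_Lpw p \<theta> f \<longleftrightarrow> set_borel_measurable lebesgue {0<..} f \<and> wint p \<theta> f < \<infinity>"

definition normw :: "real \<Rightarrow> real \<Rightarrow> (real \<Rightarrow> real) \<Rightarrow> real" where
  "normw p \<theta> f = enn2real (wint p \<theta> f) powr (1 / p)"

definition Hker :: "real \<Rightarrow> real \<Rightarrow> real \<Rightarrow> real \<Rightarrow> real \<Rightarrow> real" where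
  "Hker lam mu nu x y = x powr mu * y powr nu / (x + y) powr lam"

definition Hop :: "real \<Rightarrow> real \<Rightarrow> real \<Rightarrow> (real \<Rightarrow> real) \<Rightarrow> real \<Rightarrow> real" where
  "Hop lam mu nu f y = (\<integral>x\<in>{0<..}. Hker lam mu nu x y * f x \<partial>lebesgue)"

definition H_bounded :: "real \<Rightarrow> real \<Rightarrow> real \<Rightarrow> real \<Rightarrow> real \<Rightarrow> real \<Rightarrow> bool" where
  "H_bounded p \<alpha> \<beta> lam mu nu \<longleftrightarrow>
     (\<exists>C. \<forall>f. in_Lpw p \<alpha> f \<longrightarrow>
        (\<forall>y>0. set_integrable lebesgue {0<..} (\<lambda>x. Hker lam mu nu x y * f x))
        \<and> in_Lpw p \<beta> (Hop lam mu nu f)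
        \<and> normw p \<beta> (Hop lam mu nu f) \<le> C * normw p \<alpha> f)"

definition H_opnorm :: "real \<Rightarrow> real \<Rightarrow> real \<Rightarrow> real \<Rightarrow> real \<Rightarrow> real \<Rightarrow> real" where
  "H_opnorm p \<alpha> \<beta> lam mu nu =
     Sup {normw p \<beta> (Hop lam mu nu f) / normw p \<alpha> f | f. in_Lpw p \<alpha> f \<and> normw p \<alpha> f \<noteq> 0}"

end

theory Submission
  imports Defs
begin

text \<open>
  Put \<open>s = (alpha + 1) / p\<close>, \<open>t = (beta + 1) / p\<close>, \<open>a = mu + 1 - s\<close> and \<open>b = nu + t\<close>;
  the conditions of the theorem say exactly \<open>lam = a + b\<close>, \<open>a > 0\<close> and \<open>b > 0\<close>.
  By the Beta integral \<open>\<integral>\<^sub>0^\<infinity> z^(r-1) (z + c)^(-lam) dz = c^(r-lam) B(r, lam - r)\<close>, the weight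
  \<open>K(x, y) x^(-s) dx\<close> has mass \<open>y^(-t) B(a, b)\<close> and \<open>K(x, y) y^(t-1) dy\<close> has mass
  \<open>x^(mu - a) B(a, b)\<close>. Jensen's inequality for the first weight followed by Tonelli with the
  second gives \<open>||H f|| \<le> B(a, b) ||f||\<close> (Schur's test).

  Conversely, testing with \<open>indicator {t..2 t}\<close> for all \<open>t > 0\<close> forces the homogeneity relation
  \<open>lam = a + b\<close>, and for \<open>f = indicator {1..2}\<close> the function \<open>H f\<close> behaves like \<open>y^nu\<close>
  near \<open>0\<close> and like \<open>y^(nu - lam)\<close> near infinity, which lies in \<open>L^p_beta\<close> only if
  \<open>b > 0\<close> and \<open>a > 0\<close>. Finally the functions \<open>x^(-s-eps)\<close> on \<open>[1, \<infinity>)\<close> have norm ratio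
  at least \<open>M^(-2 eps)\<close> times the Beta integral truncated to \<open>[1/M, M]\<close>, which tends to
  \<open>B(a, b)\<close>; so the bound is sharp.
\<close>

section \<open>Beta integrals on the half-line\<close>

lemma nn_integral_indicator_incseq_SUP:
  fixes f :: "'a \<Rightarrow> ennreal"
  assumes inc: "incseq A" and [measurable]: "\<And>n. A n \<in> sets M" "f \<in> borel_measurable M"
  shows "(SUP n. \<integral>\<^sup>+x. f x * indicator (A n) x \<partial>M) = (\<integral>\<^sup>+x. f x * indicator (\<Union>n. A n) x \<partial>M)"
proof -
  have "(SUP n. indicator (A n) x) = (indicator (\<Union>n. A n) x :: ennreal)" for x
  proof (cases "x \<in> (\<Union>n. A n)")
    case True
    then obtain n where "x \<in> A n" by blast
    then show ?thesis by (intro antisym SUP_least SUP_upper2[of n]) (auto simp: indicator_def)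
  qed (auto simp: indicator_def)
  then have "(\<integral>\<^sup>+x. f x * indicator (\<Union>n. A n) x \<partial>M) = (\<integral>\<^sup>+x. (SUP n. f x * indicator (A n) x) \<partial>M)"
    by (intro nn_integral_cong) (simp add: SUP_mult_left_ennreal[symmetric])
  also have "\<dots> = (SUP n. \<integral>\<^sup>+x. f x * indicator (A n) x \<partial>M)"
    using inc by (intro nn_integral_monotone_convergence_SUP)
      (auto simp: incseq_def le_fun_def indicator_def subset_eq intro: mult_left_mono)
  finally show ?thesis ..
qed

lemma Beta_real_pos: "a > 0 \<Longrightarrow> b > 0 \<Longrightarrow> Beta a b > (0::real)"
  unfolding Beta_def by (intro divide_pos_pos mult_pos_pos Gamma_real_pos) auto

lemma nn_integral_Beta_substitution:
  fixes a b T :: real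
  assumes T: "T \<ge> 0"
  shows "(\<integral>\<^sup>+s. ennreal (s powr (a - 1) * (1 - s) powr (b - 1)) * indicator {0..T / (1 + T)} s \<partial>lborel)
       = (\<integral>\<^sup>+t. ennreal (t powr (a - 1) / (1 + t) powr (a + b)) * indicator {0..T} t \<partial>lborel)"
proof -
  define F where "F s = s powr (a - 1) * (1 - s) powr (b - 1)" for s :: real
  define g where "g t = t / (1 + t)" for t :: real
  have F_g: "F (g t) / (1 + t)\<^sup>2 = t powr (a - 1) / (1 + t) powr (a + b)" if "t \<ge> 0" for t
  proof -
    have "(1 + t) powr (a + b) = (1 + t) powr (a - 1) * (1 + t) powr (b - 1) * (1 + t) powr 2"
      by (simp add: powr_add[symmetric])
    moreover have "1 - g t = 1 / (1 + t)" using that by (simp add: g_def field_simps)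
    ultimately show ?thesis using that by (simp add: F_def g_def powr_divide powr_numeral field_simps)
  qed
  have "(\<integral>\<^sup>+s. ennreal (F s) * indicator {0..T / (1 + T)} s \<partial>lborel)
      = (\<integral>\<^sup>+s. ennreal (F s * indicator {g 0..g T} s) \<partial>lborel)"
    by (intro nn_integral_cong) (auto simp: g_def indicator_def)
  also have "\<dots> = (\<integral>\<^sup>+t. ennreal (F (g t) * (1 / (1 + t)\<^sup>2) * indicator {0..T} t) \<partial>lborel)"
  proof (rule nn_integral_substitution)
    show "(g has_real_derivative 1 / (1 + t)\<^sup>2) (at t)" if "t \<in> {0..T}" for t
      unfolding g_def using that
      by (auto intro!: derivative_eq_intros simp: power2_eq_square field_simps)
  qed (use T in \<open>auto simp: set_borel_measurable_def F_def intro!: continuous_intros\<close>)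
  also have "\<dots> = (\<integral>\<^sup>+t. ennreal (t powr (a - 1) / (1 + t) powr (a + b)) * indicator {0..T} t \<partial>lborel)"
    by (intro nn_integral_cong) (auto simp: F_g indicator_def)
  finally show ?thesis by (simp add: F_def)
qed

lemma nn_integral_Beta_half_line:
  fixes a b :: real
  assumes a: "a > 0" and b: "b > 0"
  shows "(\<integral>\<^sup>+t. ennreal (t powr (a - 1) / (1 + t) powr (a + b)) * indicator {0..} t \<partial>lborel)
         = ennreal (Beta a b)"
proof -
  define F where "F s = ennreal (s powr (a - 1) * (1 - s) powr (b - 1))" for s :: real
  define G where "G t = ennreal (t powr (a - 1) / (1 + t) powr (a + b))" for t :: real
  have [measurable]: "F \<in> borel_measurable borel" "G \<in> borel_measurable borel"
    unfolding F_def G_def by measurable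
  have "(\<Union>n. {0..real n / (1 + real n)}) = {0..<1}"
  proof (intro equalityI subsetI)
    fix s :: real assume "s \<in> {0..<1}"
    moreover obtain n :: nat where "s / (1 - s) \<le> real n" using real_arch_simple by blast
    ultimately have "s \<in> {0..real n / (1 + real n)}" by (simp add: field_simps)
    then show "s \<in> (\<Union>n. {0..real n / (1 + real n)})" by blast
  next
    fix s assume "s \<in> (\<Union>n. {0..real n / (1 + real n)})"
    then obtain n :: nat where "0 \<le> s" "s \<le> real n / (1 + real n)" by auto
    moreover have "real n / (1 + real n) < 1" by (simp add: divide_less_eq)
    ultimately show "s \<in> {0..<1}" unfolding atLeastLessThan_iff by linarith
  qed
  moreover have "incseq (\<lambda>n. {0..real n / (1 + real n)})"
    by (auto simp: incseq_def frac_le field_simps)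
  ultimately have "(SUP n. \<integral>\<^sup>+s. F s * indicator {0..real n / (1 + real n)} s \<partial>lborel)
      = (\<integral>\<^sup>+s. F s * indicator {0..<1} s \<partial>lborel)"
    using nn_integral_indicator_incseq_SUP[of "\<lambda>n. {0..real n / (1 + real n)}" lborel F] by simp
  also have "\<dots> = (\<integral>\<^sup>+s. F s * indicator {0..1} s \<partial>lborel)"
    by (intro nn_integral_cong_AE eventually_mono[OF AE_lborel_singleton[of 1]]) (auto simp: indicator_def)
  also have "\<dots> = ennreal (Beta a b)"
    unfolding F_def by (rule nn_integral_has_integral_lebesgue'[OF _ has_integral_Beta_real[OF a b]]) auto
  finally have left: "(SUP n. \<integral>\<^sup>+t. G t * indicator {0..real n} t \<partial>lborel) = ennreal (Beta a b)"
    by (simp add: F_def G_def nn_integral_Beta_substitution)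
  have "(\<Union>n. {0..real n}) = {0..}" by (auto intro: real_arch_simple)
  moreover have "incseq (\<lambda>n. {0..real n})" by (auto simp: incseq_def)
  ultimately have "(SUP n. \<integral>\<^sup>+t. G t * indicator {0..real n} t \<partial>lborel)
      = (\<integral>\<^sup>+t. G t * indicator {0..} t \<partial>lborel)"
    using nn_integral_indicator_incseq_SUP[of "\<lambda>n. {0..real n}" lborel G] by simp
  with left show ?thesis by (simp add: G_def)
qed

lemma nn_integral_Beta_shifted:
  fixes c r lam :: real
  assumes c: "c > 0" and r: "0 < r" "r < lam"
  shows "(\<integral>\<^sup>+z. ennreal (z powr (r - 1) / (z + c) powr lam) * indicator {0<..} z \<partial>lborel)
       = ennreal (c powr (r - lam) * Beta r (lam - r))"
proof -
  have "(\<integral>\<^sup>+z. ennreal (z powr (r - 1) / (z + c) powr lam) * indicator {0<..} z \<partial>lborel)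
      = ennreal c * (\<integral>\<^sup>+t. ennreal ((c * t) powr (r - 1) / (c * t + c) powr lam) * indicator {0<..} (c * t) \<partial>lborel)"
    using nn_integral_real_affine[of "\<lambda>z. ennreal (z powr (r - 1) / (z + c) powr lam) * indicator {0<..} z" c 0] c
    by simp
  also have "(\<integral>\<^sup>+t. ennreal ((c * t) powr (r - 1) / (c * t + c) powr lam) * indicator {0<..} (c * t) \<partial>lborel)
      = (\<integral>\<^sup>+t. ennreal (c powr (r - 1 - lam)) *
            (ennreal (t powr (r - 1) / (1 + t) powr (r + (lam - r))) * indicator {0..} t) \<partial>lborel)"
  proof (intro nn_integral_cong_AE eventually_mono[OF AE_lborel_singleton[of 0]])
    fix t :: real assume "t \<noteq> 0"
    then consider "t > 0" | "t < 0" by linarith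
    then show "ennreal ((c * t) powr (r - 1) / (c * t + c) powr lam) * indicator {0<..} (c * t) =
        ennreal (c powr (r - 1 - lam)) * (ennreal (t powr (r - 1) / (1 + t) powr (r + (lam - r))) * indicator {0..} t)"
    proof cases
      case 1
      have "c * t + c = c * (1 + t)" by (simp add: algebra_simps)
      then have "(c * t) powr (r - 1) / (c * t + c) powr lam = c powr (r - 1 - lam) * (t powr (r - 1) / (1 + t) powr lam)"
        using 1 c by (simp add: powr_mult powr_diff)
      then show ?thesis using 1 c by (simp add: ennreal_mult'[symmetric])
    next
      case 2
      then have "c * t < 0" using c by (simp add: mult_pos_neg)
      then show ?thesis using 2 by (simp add: indicator_def)
    qed
  qed
  also have "\<dots> = ennreal (c powr (r - 1 - lam)) * ennreal (Beta r (lam - r))"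
    using r nn_integral_Beta_half_line[of r "lam - r"] by (subst nn_integral_cmult) auto
  finally show ?thesis
    using c by (simp add: ennreal_mult'[symmetric] mult.assoc[symmetric] powr_diff)
qed

section \<open>A weighted Jensen inequality\<close>

lemma powr_tangent_line_le:
  fixes p h c :: real
  assumes p: "p \<ge> 1" and h: "h \<ge> 0" and c: "c > 0"
  shows "p * c powr (p - 1) * h \<le> h powr p + (p - 1) * c powr p"
proof (cases "h = 0")
  case True
  then show ?thesis using p c by simp
next
  case False
  with h have h0: "h > 0" by simp
  have "(h powr p) powr (1 / p) * (c powr p) powr (1 - 1 / p) \<le> (1 / p) * h powr p + (1 - 1 / p) * c powr p"
    by (rule Youngs_inequality_0) (use p h0 c in auto)
  moreover have "(h powr p) powr (1 / p) = h" "(c powr p) powr (1 - 1 / p) = c powr (p - 1)"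
    using p h0 c by (simp_all add: powr_powr algebra_simps)
  ultimately have "h * c powr (p - 1) \<le> (1 / p) * h powr p + (1 - 1 / p) * c powr p" by simp
  then have "p * (h * c powr (p - 1)) \<le> p * ((1 / p) * h powr p + (1 - 1 / p) * c powr p)"
    using p by (intro mult_left_mono) auto
  then show ?thesis using p by (simp add: algebra_simps)
qed

lemma nn_integral_tangent_line_le:
  fixes w h :: "'a \<Rightarrow> real" and p c W :: real
  assumes p: "p \<ge> 1" and c: "c > 0" and w: "\<And>x. w x \<ge> 0" and h: "\<And>x. h x \<ge> 0"
    and [measurable]: "w \<in> borel_measurable M" "h \<in> borel_measurable M"
    and W: "(\<integral>\<^sup>+x. ennreal (w x) \<partial>M) = ennreal W"
  shows "ennreal (p * c powr (p - 1)) * (\<integral>\<^sup>+x. ennreal (w x * h x) \<partial>M)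
           \<le> (\<integral>\<^sup>+x. ennreal (w x * h x powr p) \<partial>M) + ennreal ((p - 1) * c powr p) * ennreal W"
proof -
  have "ennreal (p * c powr (p - 1)) * (\<integral>\<^sup>+x. ennreal (w x * h x) \<partial>M)
      = (\<integral>\<^sup>+x. ennreal (p * c powr (p - 1) * (w x * h x)) \<partial>M)"
    using p c w h by (subst nn_integral_cmult[symmetric]) (auto simp: ennreal_mult'[symmetric])
  also have "\<dots> \<le> (\<integral>\<^sup>+x. ennreal (w x * h x powr p) + ennreal ((p - 1) * c powr p) * ennreal (w x) \<partial>M)"
  proof (intro nn_integral_mono)
    fix x
    have "p * c powr (p - 1) * (w x * h x) \<le> w x * h x powr p + (p - 1) * c powr p * w x"
      using mult_left_mono[OF powr_tangent_line_le[OF p h c] w] by (simp add: algebra_simps)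
    moreover have "ennreal (w x * h x powr p) + ennreal ((p - 1) * c powr p) * ennreal (w x)
        = ennreal (w x * h x powr p + (p - 1) * c powr p * w x)"
      using p w[of x] by (simp add: ennreal_mult' ennreal_plus)
    ultimately show "ennreal (p * c powr (p - 1) * (w x * h x))
        \<le> ennreal (w x * h x powr p) + ennreal ((p - 1) * c powr p) * ennreal (w x)"
      by (simp add: ennreal_leI)
  qed
  also have "\<dots> = (\<integral>\<^sup>+x. ennreal (w x * h x powr p) \<partial>M) + ennreal ((p - 1) * c powr p) * ennreal W"
    unfolding W[symmetric] by (subst nn_integral_add) (auto simp: nn_integral_cmult)
  finally show ?thesis .
qed

lemma nn_integral_Jensen_powr:
  fixes w h :: "'a \<Rightarrow> real" and p W :: real
  assumes p: "p \<ge> 1" and w: "\<And>x. w x \<ge> 0" and h: "\<And>x. h x \<ge> 0"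
    and [measurable]: "w \<in> borel_measurable M" "h \<in> borel_measurable M"
    and W: "(\<integral>\<^sup>+x. ennreal (w x) \<partial>M) = ennreal W" and W_pos: "W > 0"
    and finite: "(\<integral>\<^sup>+x. ennreal (w x * h x powr p) \<partial>M) < \<infinity>"
  shows "(\<integral>\<^sup>+x. ennreal (w x * h x) \<partial>M) < \<infinity>"
    and "enn2real (\<integral>\<^sup>+x. ennreal (w x * h x) \<partial>M) powr p
          \<le> W powr (p - 1) * enn2real (\<integral>\<^sup>+x. ennreal (w x * h x powr p) \<partial>M)"
proof -
  define A where "A = (\<integral>\<^sup>+x. ennreal (w x * h x) \<partial>M)"
  define I where "I = (\<integral>\<^sup>+x. ennreal (w x * h x powr p) \<partial>M)"
  note tangent = nn_integral_tangent_line_le[where w = w and h = h and M = M, OF p _ w h _ _ W,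
      folded A_def I_def]
  have "ennreal p * A \<le> I + ennreal (p - 1) * ennreal W"
    using tangent[of 1] by simp
  also have "\<dots> < \<infinity>"
    using finite by (simp add: I_def ennreal_mult_less_top)
  finally have "A < \<infinity>"
    using p by (auto simp: ennreal_mult_less_top top.not_eq_extremum)
  then show "(\<integral>\<^sup>+x. ennreal (w x * h x) \<partial>M) < \<infinity>" by (simp add: A_def)
  obtain a where a: "A = ennreal a" "a \<ge> 0" using \<open>A < \<infinity>\<close> by (cases A) auto
  obtain i where i: "I = ennreal i" "i \<ge> 0" using finite by (cases I) (auto simp: I_def)
  have "a powr p \<le> W powr (p - 1) * i"
  proof (cases "a = 0")
    case True
    then show ?thesis using p i W_pos by simp
  next
    case False
    with a have a_pos: "a > 0" by simp
    \<comment> \<open>the tangent line at the mean value \<open>c = a / W\<close> gives the sharp bound\<close>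
    define c where "c = a / W"
    have c: "c > 0" using a_pos W_pos by (simp add: c_def)
    have "p * c powr (p - 1) * a \<le> i + (p - 1) * c powr p * W"
      using tangent[OF c] a i p c W_pos
      by (simp add: ennreal_mult'[symmetric] ennreal_plus[symmetric] del: ennreal_plus)
    then have "p * (c powr (p - 1) * a) \<le> i + (p - 1) * (c powr p * W)"
      by (simp only: mult.assoc)
    also have "c powr p * W = c powr (p - 1) * a"
      using a_pos W_pos by (simp add: c_def powr_divide powr_diff field_simps)
    finally have "c powr (p - 1) * a \<le> i"
      by (simp add: algebra_simps)
    moreover have "c powr (p - 1) * a = a powr p / W powr (p - 1)"
      using a_pos W_pos by (simp add: c_def powr_divide powr_diff field_simps)
    ultimately have "a powr p / W powr (p - 1) \<le> i" by simp
    then show ?thesis using W_pos by (simp add: divide_le_eq mult.commute)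
  qed
  then show "enn2real A powr p \<le> W powr (p - 1) * enn2real I"
    using a i by simp
qed

section \<open>The kernel and the operator\<close>

lemma wint_lborel:
  "wint p \<theta> f = (\<integral>\<^sup>+x. ennreal (indicator {0<..} x * (\<bar>f x\<bar> powr p * x powr \<theta>)) \<partial>lborel)"
  unfolding wint_def by (simp add: nn_integral_completion)

lemma Hker_nonneg: "x > 0 \<Longrightarrow> y > 0 \<Longrightarrow> Hker lam mu nu x y \<ge> 0"
  unfolding Hker_def by simp

lemma Hker_swap: "Hker lam mu nu x y = Hker lam nu mu y x"
  unfolding Hker_def by (simp add: add.commute)

lemma borel_measurable_Hker [measurable]:
  assumes [measurable]: "f \<in> borel_measurable M" "g \<in> borel_measurable M"
  shows "(\<lambda>z. Hker lam mu nu (f z) (g z)) \<in> borel_measurable M"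
  unfolding Hker_def by measurable

lemma nn_integral_Hker_powr:
  fixes lam mu nu a y :: real
  assumes y: "y > 0" and a: "0 < a" "a < lam"
  shows "(\<integral>\<^sup>+x. ennreal (indicator {0<..} x * (Hker lam mu nu x y * x powr (a - 1 - mu))) \<partial>lborel)
       = ennreal (y powr (nu + a - lam) * Beta a (lam - a))"
proof -
  have "(\<integral>\<^sup>+x. ennreal (indicator {0<..} x * (Hker lam mu nu x y * x powr (a - 1 - mu))) \<partial>lborel)
      = (\<integral>\<^sup>+x. ennreal (y powr nu) * (ennreal (x powr (a - 1) / (x + y) powr lam) * indicator {0<..} x) \<partial>lborel)"
  proof (intro nn_integral_cong)
    fix x :: real
    have "x powr mu * x powr (a - 1 - mu) = x powr (a - 1)" if "x > 0"
      using that by (simp add: powr_add[symmetric])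
    then show "ennreal (indicator {0<..} x * (Hker lam mu nu x y * x powr (a - 1 - mu)))
        = ennreal (y powr nu) * (ennreal (x powr (a - 1) / (x + y) powr lam) * indicator {0<..} x)"
      using y by (auto simp: Hker_def indicator_def ennreal_mult'[symmetric] field_simps)
  qed
  also have "\<dots> = ennreal (y powr nu) * ennreal (y powr (a - lam) * Beta a (lam - a))"
    by (simp add: nn_integral_cmult nn_integral_Beta_shifted[OF y a])
  also have "\<dots> = ennreal (y powr (nu + a - lam) * Beta a (lam - a))"
    using y by (simp add: ennreal_mult'[symmetric] powr_add[symmetric] mult.assoc[symmetric] algebra_simps)
  finally show ?thesis .
qed

lemma nn_integral_Hker_powr':
  fixes lam mu nu b x :: real
  assumes x: "x > 0" and b: "0 < b" "b < lam"
  shows "(\<integral>\<^sup>+y. ennreal (indicator {0<..} y * (Hker lam mu nu x y * y powr (b - 1 - nu))) \<partial>lborel)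
       = ennreal (x powr (mu + b - lam) * Beta b (lam - b))"
  using nn_integral_Hker_powr[OF x b, of nu mu] by (simp add: Hker_swap[of lam mu nu])

lemma Hker_le:
  fixes a b x y :: real
  assumes x: "x > 0" and y: "y > 0" and a: "a \<ge> 0" and b: "b \<ge> 0"
  shows "Hker (a + b) mu nu x y \<le> x powr (mu - a) * y powr (nu - b)"
proof -
  have "x powr a * y powr b \<le> (x + y) powr a * (x + y) powr b"
    using x y a b by (intro mult_mono powr_mono2) auto
  then have "x powr mu * y powr nu / (x + y) powr (a + b) \<le> x powr mu * y powr nu / (x powr a * y powr b)"
    using x y by (intro divide_left_mono) (auto simp: powr_add)
  then show ?thesis
    using x y by (simp add: Hker_def powr_diff)
qed

lemma Hop_lborel:
  assumes [measurable]: "f \<in> borel_measurable lborel"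
  shows "Hop lam mu nu f y = (\<integral>x. indicator {0<..} x *\<^sub>R (Hker lam mu nu x y * f x) \<partial>lborel)"
  unfolding Hop_def set_lebesgue_integral_def by (rule integral_completion) measurable

lemma borel_measurable_Hop [measurable]:
  assumes [measurable]: "f \<in> borel_measurable lborel"
  shows "Hop lam mu nu f \<in> borel_measurable lborel"
  unfolding Hop_lborel[OF assms, abs_def] by measurable

lemma Hop_integrable_abs_le:
  assumes [measurable]: "f \<in> borel_measurable lborel" and y: "y > 0"
    and finite: "(\<integral>\<^sup>+x. ennreal (indicator {0<..} x * (Hker lam mu nu x y * \<bar>f x\<bar>)) \<partial>lborel) < \<infinity>"
  shows "integrable lborel (\<lambda>x. indicator {0<..} x *\<^sub>R (Hker lam mu nu x y * f x))"
    and "\<bar>Hop lam mu nu f y\<bar> \<le> enn2real (\<integral>\<^sup>+x. ennreal (indicator {0<..} x * (Hker lam mu nu x y * \<bar>f x\<bar>)) \<partial>lborel)"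
proof -
  have norm_eq: "(\<integral>\<^sup>+x. ennreal (norm (indicator {0<..} x *\<^sub>R (Hker lam mu nu x y * f x))) \<partial>lborel)
      = (\<integral>\<^sup>+x. ennreal (indicator {0<..} x * (Hker lam mu nu x y * \<bar>f x\<bar>)) \<partial>lborel)"
    using y Hker_nonneg[of _ y] by (intro nn_integral_cong) (auto simp: indicator_def abs_mult)
  show int: "integrable lborel (\<lambda>x. indicator {0<..} x *\<^sub>R (Hker lam mu nu x y * f x))"
    unfolding integrable_iff_bounded using finite norm_eq by simp
  have "ennreal (norm (Hop lam mu nu f y))
      \<le> (\<integral>\<^sup>+x. ennreal (norm (indicator {0<..} x *\<^sub>R (Hker lam mu nu x y * f x))) \<partial>lborel)"
    unfolding Hop_lborel[OF assms(1)] by (rule integral_norm_bound_ennreal[OF int])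
  then have "ennreal \<bar>Hop lam mu nu f y\<bar>
      \<le> (\<integral>\<^sup>+x. ennreal (indicator {0<..} x * (Hker lam mu nu x y * \<bar>f x\<bar>)) \<partial>lborel)"
    unfolding real_norm_def norm_eq[unfolded real_norm_def] .
  then show "\<bar>Hop lam mu nu f y\<bar> \<le> enn2real (\<integral>\<^sup>+x. ennreal (indicator {0<..} x * (Hker lam mu nu x y * \<bar>f x\<bar>)) \<partial>lborel)"
    using finite by (cases "\<integral>\<^sup>+x. ennreal (indicator {0<..} x * (Hker lam mu nu x y * \<bar>f x\<bar>)) \<partial>lborel") auto
qed

lemma Hop_eq_nn_integral:
  assumes [measurable]: "f \<in> borel_measurable lborel" and f: "\<And>x. f x \<ge> 0" and y: "y > 0"
    and int: "set_integrable lebesgue {0<..} (\<lambda>x. Hker lam mu nu x y * f x)"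
  shows "ennreal (Hop lam mu nu f y) = (\<integral>\<^sup>+x. ennreal (indicator {0<..} x * (Hker lam mu nu x y * f x)) \<partial>lborel)"
proof -
  have "integrable lborel (\<lambda>x. indicator {0<..} x *\<^sub>R (Hker lam mu nu x y * f x))"
    using int unfolding set_integrable_def by (subst (asm) integrable_completion) measurable
  then show ?thesis
    unfolding Hop_lborel[OF assms(1)]
    by (subst nn_integral_eq_integral) (use f y Hker_nonneg in \<open>auto simp: indicator_def\<close>)
qed

lemma Hop_nonneg:
  assumes "\<And>x. x > 0 \<Longrightarrow> f x \<ge> 0" and "y > 0"
  shows "Hop lam mu nu f y \<ge> 0"
  unfolding Hop_def set_lebesgue_integral_def
  by (rule Bochner_Integration.integral_nonneg) (use assms in \<open>auto simp: indicator_def Hker_nonneg\<close>)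

section \<open>Sufficiency: Schur's test\<close>

lemma nn_integral_Hker_weighted_le:
  fixes p y a b s \<alpha> mu nu :: real and f :: "real \<Rightarrow> real"
  assumes y: "y > 0" and a: "a \<ge> 0" and b: "b \<ge> 0" and s: "a = mu + 1 - s"
    and [measurable]: "f \<in> borel_measurable lborel"
  shows "(\<integral>\<^sup>+x. ennreal (indicator {0<..} x * (Hker (a + b) mu nu x y * x powr (\<alpha> + 1 - s) * \<bar>f x\<bar> powr p)) \<partial>lborel)
    \<le> ennreal (y powr (nu - b)) * wint p \<alpha> f"
proof -
  have "(\<integral>\<^sup>+x. ennreal (indicator {0<..} x * (Hker (a + b) mu nu x y * x powr (\<alpha> + 1 - s) * \<bar>f x\<bar> powr p)) \<partial>lborel)
      \<le> (\<integral>\<^sup>+x. ennreal (y powr (nu - b)) * ennreal (indicator {0<..} x * (\<bar>f x\<bar> powr p * x powr \<alpha>)) \<partial>lborel)"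
  proof (intro nn_integral_mono)
    fix x :: real
    show "ennreal (indicator {0<..} x * (Hker (a + b) mu nu x y * x powr (\<alpha> + 1 - s) * \<bar>f x\<bar> powr p))
        \<le> ennreal (y powr (nu - b)) * ennreal (indicator {0<..} x * (\<bar>f x\<bar> powr p * x powr \<alpha>))"
    proof (cases "x > 0")
      case True
      have "Hker (a + b) mu nu x y * x powr (\<alpha> + 1 - s) \<le> x powr (mu - a) * y powr (nu - b) * x powr (\<alpha> + 1 - s)"
        using Hker_le[OF True y a b] by (intro mult_right_mono) auto
      also have "\<dots> = y powr (nu - b) * x powr \<alpha>"
        using True by (simp add: powr_add[symmetric] s)
      finally have "Hker (a + b) mu nu x y * x powr (\<alpha> + 1 - s) * \<bar>f x\<bar> powr p
          \<le> y powr (nu - b) * x powr \<alpha> * \<bar>f x\<bar> powr p"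
        by (rule mult_right_mono) simp
      then show ?thesis
        using True y by (simp add: ennreal_mult'[symmetric] mult_ac)
    qed simp
  qed
  also have "\<dots> = ennreal (y powr (nu - b)) * wint p \<alpha> f"
    unfolding wint_lborel by (rule nn_integral_cmult) measurable
  finally show ?thesis .
qed

lemma nn_integral_Hker_Holder:
  fixes p y a b s \<alpha> mu nu :: real and f :: "real \<Rightarrow> real"
  assumes p: "p \<ge> 1" and y: "y > 0" and a: "a > 0" and b: "b > 0"
    and s: "a = mu + 1 - s" and sp: "\<alpha> + 1 = s * p"
    and [measurable]: "f \<in> borel_measurable lborel" and f_finite: "wint p \<alpha> f < \<infinity>"
  defines "I \<equiv> (\<integral>\<^sup>+x. ennreal (indicator {0<..} x * (Hker (a + b) mu nu x y * x powr (\<alpha> + 1 - s) * \<bar>f x\<bar> powr p)) \<partial>lborel)"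
  shows "I < \<infinity>"
    and "(\<integral>\<^sup>+x. ennreal (indicator {0<..} x * (Hker (a + b) mu nu x y * \<bar>f x\<bar>)) \<partial>lborel) < \<infinity>"
    and "enn2real (\<integral>\<^sup>+x. ennreal (indicator {0<..} x * (Hker (a + b) mu nu x y * \<bar>f x\<bar>)) \<partial>lborel) powr p
         \<le> (y powr (nu - b) * Beta a b) powr (p - 1) * enn2real I"
proof -
  \<comment> \<open>Jensen for the weight \<open>K(x, y) x^(-s) dx\<close> of total mass \<open>y^(nu - b) B(a, b)\<close>,
    applied to \<open>x^s |f x|\<close>\<close>
  define w where "w x = indicator {0<..} x * (Hker (a + b) mu nu x y * x powr (a - 1 - mu))" for x
  define h where "h x = x powr s * \<bar>f x\<bar>" for x
  have w_nonneg: "w x \<ge> 0" for x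
    unfolding w_def using y Hker_nonneg[of x y] by (cases "x > 0") auto
  have h_nonneg: "h x \<ge> 0" for x
    unfolding h_def by simp
  have w_meas: "w \<in> borel_measurable lborel" and h_meas: "h \<in> borel_measurable lborel"
    unfolding w_def h_def by measurable
  have W: "(\<integral>\<^sup>+x. ennreal (w x) \<partial>lborel) = ennreal (y powr (nu - b) * Beta a b)"
    unfolding w_def using nn_integral_Hker_powr[of y a "a + b" mu nu] y a b by simp
  have W_pos: "y powr (nu - b) * Beta a b > 0"
    using y a b by (simp add: Beta_real_pos)
  have wh_p: "w x * h x powr p = indicator {0<..} x * (Hker (a + b) mu nu x y * x powr (\<alpha> + 1 - s) * \<bar>f x\<bar> powr p)" for x
  proof (cases "x > 0")
    case True
    then have "h x powr p = x powr (\<alpha> + 1) * \<bar>f x\<bar> powr p"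
      by (simp add: h_def powr_mult powr_powr sp)
    moreover have "x powr (a - 1 - mu) * x powr (\<alpha> + 1) = x powr (\<alpha> + 1 - s)"
      using True by (simp add: powr_add[symmetric] s)
    ultimately show ?thesis
      using True by (simp add: w_def mult.assoc[symmetric])
  qed (simp add: w_def)
  have wh: "w x * h x = indicator {0<..} x * (Hker (a + b) mu nu x y * \<bar>f x\<bar>)" for x
  proof (cases "x > 0")
    case True
    then have "x powr (a - 1 - mu) * x powr s = 1" by (simp add: powr_add[symmetric] s)
    then show ?thesis unfolding w_def h_def using True by (simp add: algebra_simps)
  qed (simp add: w_def)
  have "I \<le> ennreal (y powr (nu - b)) * wint p \<alpha> f"
    unfolding I_def using y a b s by (intro nn_integral_Hker_weighted_le) auto
  also have "\<dots> < \<infinity>"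
    using f_finite by (simp add: ennreal_mult_less_top)
  finally show I_finite: "I < \<infinity>" .
  have "(\<integral>\<^sup>+x. ennreal (w x * h x powr p) \<partial>lborel) < \<infinity>"
    using I_finite by (simp add: wh_p I_def)
  note Jensen = nn_integral_Jensen_powr[OF p w_nonneg h_nonneg w_meas h_meas W W_pos this]
  show "(\<integral>\<^sup>+x. ennreal (indicator {0<..} x * (Hker (a + b) mu nu x y * \<bar>f x\<bar>)) \<partial>lborel) < \<infinity>"
    using Jensen(1) unfolding wh .
  show "enn2real (\<integral>\<^sup>+x. ennreal (indicator {0<..} x * (Hker (a + b) mu nu x y * \<bar>f x\<bar>)) \<partial>lborel) powr p
         \<le> (y powr (nu - b) * Beta a b) powr (p - 1) * enn2real I"
    using Jensen(2) unfolding wh wh_p I_def .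
qed

lemma Hop_powr_le:
  fixes p y a b s t \<alpha> \<beta> mu nu :: real and f :: "real \<Rightarrow> real"
  assumes p: "p \<ge> 1" and y: "y > 0" and a: "a > 0" and b: "b > 0"
    and s: "a = mu + 1 - s" and t: "b = nu + t" and sp: "\<alpha> + 1 = s * p" and tp: "\<beta> + 1 = t * p"
    and [measurable]: "f \<in> borel_measurable lborel" and f_finite: "wint p \<alpha> f < \<infinity>"
  defines "I \<equiv> (\<integral>\<^sup>+x. ennreal (indicator {0<..} x * (Hker (a + b) mu nu x y * x powr (\<alpha> + 1 - s) * \<bar>f x\<bar> powr p)) \<partial>lborel)"
  shows "I < \<infinity>"
    and "\<bar>Hop (a + b) mu nu f y\<bar> powr p * y powr \<beta> \<le> Beta a b powr (p - 1) * y powr (t - 1) * enn2real I"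
proof -
  note Holder = nn_integral_Hker_Holder[where nu = nu and f = f, OF p y a b s sp, folded I_def]
  show "I < \<infinity>" using Holder(1) f_finite by simp
  have "\<bar>Hop (a + b) mu nu f y\<bar> powr p
      \<le> enn2real (\<integral>\<^sup>+x. ennreal (indicator {0<..} x * (Hker (a + b) mu nu x y * \<bar>f x\<bar>)) \<partial>lborel) powr p"
    using Hop_integrable_abs_le(2)[OF _ y Holder(2)] f_finite p by (intro powr_mono2) auto
  also have "\<dots> \<le> (y powr (- t) * Beta a b) powr (p - 1) * enn2real I"
    using Holder(3) f_finite t by simp
  finally have "\<bar>Hop (a + b) mu nu f y\<bar> powr p * y powr \<beta> \<le> (y powr (- t) * Beta a b) powr (p - 1) * enn2real I * y powr \<beta>"
    by (rule mult_right_mono) simp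
  also have "\<dots> = Beta a b powr (p - 1) * y powr (t - 1) * enn2real I"
  proof -
    have "(y powr (- t) * Beta a b) powr (p - 1) = y powr (- t * (p - 1)) * Beta a b powr (p - 1)"
      using y a b by (simp add: powr_mult powr_powr Beta_real_pos)
    moreover have "- t * (p - 1) + \<beta> = t - 1"
      using tp by (simp add: algebra_simps)
    then have "y powr (- t * (p - 1)) * y powr \<beta> = y powr (t - 1)"
      by (simp add: powr_add[symmetric])
    ultimately show ?thesis by (simp add: mult_ac)
  qed
  finally show "\<bar>Hop (a + b) mu nu f y\<bar> powr p * y powr \<beta> \<le> Beta a b powr (p - 1) * y powr (t - 1) * enn2real I" .
qed

lemma wint_Hop_le_Beta:
  fixes p a b s t \<alpha> \<beta> mu nu :: real and f :: "real \<Rightarrow> real"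
  assumes p: "p \<ge> 1" and a: "a > 0" and b: "b > 0"
    and s: "a = mu + 1 - s" and t: "b = nu + t" and sp: "\<alpha> + 1 = s * p" and tp: "\<beta> + 1 = t * p"
    and f[measurable]: "f \<in> borel_measurable lborel" and f_finite: "wint p \<alpha> f < \<infinity>"
  shows "wint p \<beta> (Hop (a + b) mu nu f) \<le> ennreal (Beta a b powr p) * wint p \<alpha> f"
proof -
  define B where "B = Beta a b"
  define F where "F x y = ennreal (B powr (p - 1) * (indicator {0<..} y * y powr (t - 1))) *
    ennreal (indicator {0<..} x * (Hker (a + b) mu nu x y * x powr (\<alpha> + 1 - s) * \<bar>f x\<bar> powr p))" for x y
  have B_pos: "B > 0" using a b by (simp add: B_def Beta_real_pos)
  have "wint p \<beta> (Hop (a + b) mu nu f) \<le> (\<integral>\<^sup>+y. \<integral>\<^sup>+x. F x y \<partial>lborel \<partial>lborel)"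
    unfolding wint_lborel
  proof (intro nn_integral_mono)
    fix y :: real
    show "ennreal (indicator {0<..} y * (\<bar>Hop (a + b) mu nu f y\<bar> powr p * y powr \<beta>)) \<le> (\<integral>\<^sup>+x. F x y \<partial>lborel)"
    proof (cases "y > 0")
      case True
      note bound = Hop_powr_le[OF p True a b s t sp tp f f_finite]
      have "ennreal (indicator {0<..} y * (\<bar>Hop (a + b) mu nu f y\<bar> powr p * y powr \<beta>))
          \<le> ennreal (B powr (p - 1) * (indicator {0<..} y * y powr (t - 1))) *
             ennreal (enn2real (\<integral>\<^sup>+x. ennreal (indicator {0<..} x * (Hker (a + b) mu nu x y *
                x powr (\<alpha> + 1 - s) * \<bar>f x\<bar> powr p)) \<partial>lborel))"
        using bound(2) True B_pos by (simp add: B_def ennreal_mult'[symmetric] ennreal_leI)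
      also have "\<dots> = (\<integral>\<^sup>+x. F x y \<partial>lborel)"
        using bound(1) by (simp add: F_def nn_integral_cmult)
      finally show ?thesis .
    qed simp
  qed
  also have "\<dots> = (\<integral>\<^sup>+x. \<integral>\<^sup>+y. F x y \<partial>lborel \<partial>lborel)"
    unfolding F_def by (rule lborel_pair.Fubini') measurable
  also have "\<dots> = (\<integral>\<^sup>+x. ennreal (B powr p) * ennreal (indicator {0<..} x * (\<bar>f x\<bar> powr p * x powr \<alpha>)) \<partial>lborel)"
  proof (intro nn_integral_cong)
    fix x :: real
    show "(\<integral>\<^sup>+y. F x y \<partial>lborel) = ennreal (B powr p) * ennreal (indicator {0<..} x * (\<bar>f x\<bar> powr p * x powr \<alpha>))"
    proof (cases "x > 0")
      case x: True
      have "(\<integral>\<^sup>+y. F x y \<partial>lborel) = (\<integral>\<^sup>+y. ennreal (B powr (p - 1) * x powr (\<alpha> + 1 - s) * \<bar>f x\<bar> powr p) *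
          ennreal (indicator {0<..} y * (Hker (a + b) mu nu x y * y powr (b - 1 - nu))) \<partial>lborel)"
        using x B_pos t
        by (intro nn_integral_cong) (auto simp: F_def ennreal_mult'[symmetric] Hker_nonneg mult_ac indicator_def)
      also have "\<dots> = ennreal (B powr (p - 1) * x powr (\<alpha> + 1 - s) * \<bar>f x\<bar> powr p) * ennreal (x powr (mu - a) * B)"
        using nn_integral_Hker_powr'[OF x b, of "a + b" mu nu] a
        by (simp add: nn_integral_cmult B_def Beta_commute)
      also have "\<dots> = ennreal (B powr p) * ennreal (indicator {0<..} x * (\<bar>f x\<bar> powr p * x powr \<alpha>))"
      proof -
        have "x powr (\<alpha> + 1 - s) * x powr (mu - a) = x powr \<alpha>"
          using x s by (simp add: powr_add[symmetric])
        moreover have "B powr (p - 1) * B = B powr p"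
          using B_pos by (simp add: powr_add[symmetric] powr_diff)
        ultimately show ?thesis
          using x B_pos by (simp add: ennreal_mult'[symmetric] mult_ac)
      qed
      finally show ?thesis .
    qed (simp add: F_def)
  qed
  also have "\<dots> = ennreal (B powr p) * wint p \<alpha> f"
    unfolding wint_lborel by (rule nn_integral_cmult) measurable
  finally show ?thesis by (simp add: B_def)
qed

lemma in_Lpw_AE_borel:
  assumes "in_Lpw p \<theta> f"
  obtains g where "g \<in> borel_measurable lborel" "AE x in lborel. x > 0 \<longrightarrow> f x = g x"
proof -
  have "(\<lambda>x. indicator {0<..} x *\<^sub>R f x) \<in> borel_measurable (completion lborel)"
    using assms by (simp add: in_Lpw_def set_borel_measurable_def)
  from completion_ex_borel_measurable_real[OF this]
  obtain g where "g \<in> borel_measurable lborel" "AE x in lborel. indicator {0<..} x *\<^sub>R f x = g x"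
    by blast
  moreover from this(2) have "AE x in lborel. x > 0 \<longrightarrow> f x = g x"
    by eventually_elim (auto simp: indicator_def)
  ultimately show ?thesis using that by blast
qed

lemma Hop_integrand_measurable:
  assumes "set_borel_measurable lebesgue {0<..} f"
  shows "(\<lambda>x. indicator {0<..} x *\<^sub>R (Hker lam mu nu x y * f x)) \<in> borel_measurable lebesgue"
proof -
  have "(\<lambda>x. Hker lam mu nu x y) \<in> borel_measurable lebesgue"
    by (rule measurable_completion) measurable
  moreover have "(\<lambda>x. indicator {0<..} x *\<^sub>R f x) \<in> borel_measurable lebesgue"
    using assms by (simp add: set_borel_measurable_def)
  ultimately have "(\<lambda>x. Hker lam mu nu x y * (indicator {0<..} x *\<^sub>R f x)) \<in> borel_measurable lebesgue"
    by (rule borel_measurable_times)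
  moreover have "(\<lambda>x. Hker lam mu nu x y * (indicator {0<..} x *\<^sub>R f x))
      = (\<lambda>x. indicator {0<..} x *\<^sub>R (Hker lam mu nu x y * f x))"
    by (auto simp: indicator_def)
  ultimately show ?thesis by simp
qed

lemma AE_pos_cong_wint_Hop:
  assumes f: "set_borel_measurable lebesgue {0<..} f" and [measurable]: "g \<in> borel_measurable lborel"
    and ae: "AE x in lborel. x > 0 \<longrightarrow> f x = g x"
  shows "wint p \<theta> f = wint p \<theta> g"
    and "Hop lam mu nu f = Hop lam mu nu g"
    and "set_integrable lebesgue {0<..} (\<lambda>x. Hker lam mu nu x y * f x) \<longleftrightarrow>
         set_integrable lebesgue {0<..} (\<lambda>x. Hker lam mu nu x y * g x)"
proof -
  show "wint p \<theta> f = wint p \<theta> g"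
    unfolding wint_lborel by (intro nn_integral_cong_AE) (use ae in \<open>eventually_elim, auto simp: indicator_def\<close>)
  have g: "set_borel_measurable lebesgue {0<..} g"
    unfolding set_borel_measurable_def by (rule measurable_completion) measurable
  have ae': "AE x in lebesgue. indicator {0<..} x *\<^sub>R (Hker lam mu nu x y * f x)
      = indicator {0<..} x *\<^sub>R (Hker lam mu nu x y * g x)" for y
    using AE_completion[OF ae] by eventually_elim (auto simp: indicator_def)
  show "Hop lam mu nu f = Hop lam mu nu g"
    unfolding Hop_def set_lebesgue_integral_def
    by (intro ext integral_cong_AE Hop_integrand_measurable f g ae')
  show "set_integrable lebesgue {0<..} (\<lambda>x. Hker lam mu nu x y * f x) \<longleftrightarrow>
        set_integrable lebesgue {0<..} (\<lambda>x. Hker lam mu nu x y * g x)"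
    unfolding set_integrable_def by (intro integrable_cong_AE Hop_integrand_measurable f g ae')
qed

lemma normw_le_of_wint_le:
  assumes p: "p > 0" and C: "C \<ge> 0" and finite: "wint p \<alpha> f < \<infinity>"
    and le: "wint p \<beta> g \<le> ennreal (C powr p) * wint p \<alpha> f"
  shows "normw p \<beta> g \<le> C * normw p \<alpha> f"
proof -
  have "enn2real (wint p \<beta> g) \<le> enn2real (ennreal (C powr p) * wint p \<alpha> f)"
    using le finite by (intro enn2real_mono) (auto simp: ennreal_mult_less_top)
  also have "\<dots> = C powr p * enn2real (wint p \<alpha> f)"
    by (simp add: enn2real_mult)
  finally have "enn2real (wint p \<beta> g) powr (1 / p) \<le> (C powr p * enn2real (wint p \<alpha> f)) powr (1 / p)"
    using p by (intro powr_mono2) auto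
  also have "\<dots> = C * enn2real (wint p \<alpha> f) powr (1 / p)"
    using C p by (simp add: powr_mult powr_powr)
  finally show ?thesis unfolding normw_def .
qed

lemma Hop_set_integrable:
  fixes p y a b s \<alpha> mu nu :: real and f :: "real \<Rightarrow> real"
  assumes p: "p \<ge> 1" and y: "y > 0" and a: "a > 0" and b: "b > 0"
    and s: "a = mu + 1 - s" and sp: "\<alpha> + 1 = s * p"
    and [measurable]: "f \<in> borel_measurable lborel" and f_finite: "wint p \<alpha> f < \<infinity>"
  shows "set_integrable lebesgue {0<..} (\<lambda>x. Hker (a + b) mu nu x y * f x)"
proof -
  have "integrable lborel (\<lambda>x. indicator {0<..} x *\<^sub>R (Hker (a + b) mu nu x y * f x))"
    using nn_integral_Hker_Holder(2)[OF p y a b s sp _ f_finite]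
    by (intro Hop_integrable_abs_le(1)[OF _ y]) auto
  then show ?thesis
    unfolding set_integrable_def by (subst integrable_completion) measurable
qed

lemma Beta_exponents_iff:
  fixes p \<alpha> \<beta> lam mu nu :: real
  assumes p: "p > 0"
  shows "lam = mu + nu + 1 + (\<beta> - \<alpha>) / p \<longleftrightarrow> lam = (mu + 1 - (\<alpha> + 1) / p) + (nu + (\<beta> + 1) / p)"
    and "\<alpha> + 1 < p * (mu + 1) \<longleftrightarrow> 0 < mu + 1 - (\<alpha> + 1) / p"
    and "- p * nu < \<beta> + 1 \<longleftrightarrow> 0 < nu + (\<beta> + 1) / p"
proof -
  have "(\<beta> + 1) / p - (\<alpha> + 1) / p = (\<beta> - \<alpha>) / p"
    by (simp add: diff_divide_distrib[symmetric])
  then show "lam = mu + nu + 1 + (\<beta> - \<alpha>) / p \<longleftrightarrow> lam = (mu + 1 - (\<alpha> + 1) / p) + (nu + (\<beta> + 1) / p)"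
    by linarith
  show "\<alpha> + 1 < p * (mu + 1) \<longleftrightarrow> 0 < mu + 1 - (\<alpha> + 1) / p"
    using p by (simp add: field_simps)
  show "- p * nu < \<beta> + 1 \<longleftrightarrow> 0 < nu + (\<beta> + 1) / p"
    using p by (auto simp: field_simps)
qed

lemma Hop_bounded_Beta:
  fixes p \<alpha> \<beta> lam mu nu :: real
  assumes p: "p \<ge> 1" and lam: "lam = mu + nu + 1 + (\<beta> - \<alpha>) / p"
    and \<alpha>: "\<alpha> + 1 < p * (mu + 1)" and \<beta>: "- p * nu < \<beta> + 1"
    and f: "in_Lpw p \<alpha> f"
  shows "\<forall>y>0. set_integrable lebesgue {0<..} (\<lambda>x. Hker lam mu nu x y * f x)"
    and "in_Lpw p \<beta> (Hop lam mu nu f)"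
    and "normw p \<beta> (Hop lam mu nu f) \<le> Beta (mu + 1 - (\<alpha> + 1) / p) (nu + (\<beta> + 1) / p) * normw p \<alpha> f"
proof -
  define s t where "s = (\<alpha> + 1) / p" and "t = (\<beta> + 1) / p"
  define a b where "a = mu + 1 - s" and "b = nu + t"
  have p_pos: "p > 0" using p by simp
  have a_pos: "a > 0" and b_pos: "b > 0" and lam_ab: "lam = a + b"
    using lam \<alpha> \<beta> unfolding Beta_exponents_iff[OF p_pos] by (simp_all add: a_def b_def s_def t_def)
  have sp: "\<alpha> + 1 = s * p" and tp: "\<beta> + 1 = t * p"
    using p_pos by (simp_all add: s_def t_def)
  \<comment> \<open>\<open>f\<close> is only Lebesgue measurable; Schur's test is applied to a Borel representative\<close>
  obtain g where g[measurable]: "g \<in> borel_measurable lborel" and ae: "AE x in lborel. x > 0 \<longrightarrow> f x = g x"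
    using in_Lpw_AE_borel[OF f] by blast
  have f_meas: "set_borel_measurable lebesgue {0<..} f" and f_finite: "wint p \<alpha> f < \<infinity>"
    using f by (simp_all add: in_Lpw_def)
  note cong = AE_pos_cong_wint_Hop[OF f_meas g ae]
  have g_finite: "wint p \<alpha> g < \<infinity>" using f_finite cong(1) by simp
  show "\<forall>y>0. set_integrable lebesgue {0<..} (\<lambda>x. Hker lam mu nu x y * f x)"
    using Hop_set_integrable[OF p _ a_pos b_pos a_def sp g g_finite] cong(3) lam_ab by blast
  have le: "wint p \<beta> (Hop lam mu nu f) \<le> ennreal (Beta a b powr p) * wint p \<alpha> f"
    using wint_Hop_le_Beta[OF p a_pos b_pos a_def b_def sp tp g g_finite] cong lam_ab by simp
  have [measurable]: "Hop lam mu nu f \<in> borel_measurable borel"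
    using cong(2) by (simp add: measurable_lborel1)
  have "set_borel_measurable lebesgue {0<..} (Hop lam mu nu f)"
    unfolding set_borel_measurable_def by (intro measurable_completion) measurable
  moreover have "wint p \<beta> (Hop lam mu nu f) < \<infinity>"
    using le f_finite by (simp add: ennreal_mult_less_top le_less_trans)
  ultimately show "in_Lpw p \<beta> (Hop lam mu nu f)"
    by (simp add: in_Lpw_def)
  show "normw p \<beta> (Hop lam mu nu f) \<le> Beta (mu + 1 - (\<alpha> + 1) / p) (nu + (\<beta> + 1) / p) * normw p \<alpha> f"
    using normw_le_of_wint_le[OF p_pos _ f_finite le] a_pos b_pos
    by (simp add: a_def b_def s_def t_def Beta_real_pos less_imp_le)
qed

section \<open>Necessity\<close>

lemma ennreal_le_imp_le_enn2real:
  assumes "ennreal x \<le> X" and "X < top"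
  shows "x \<le> enn2real X"
proof (cases "x \<ge> 0")
  case True
  then show ?thesis using enn2real_mono[OF assms] by simp
qed (simp add: order_trans[OF _ enn2real_nonneg])

lemma powr_bounds_of_ratio:
  fixes u k z e :: real
  assumes u: "u > 0" and k: "k \<ge> 1" and z: "u \<le> z" "z \<le> k * u"
  shows "u powr e * min 1 (k powr e) \<le> z powr e" and "z powr e \<le> u powr e * max 1 (k powr e)"
proof -
  define r where "r = z / u"
  have r: "1 \<le> r" "r \<le> k" using u z by (simp_all add: r_def field_simps)
  have z_eq: "z powr e = u powr e * r powr e" using u r by (simp add: r_def powr_divide)
  have "min 1 (k powr e) \<le> r powr e \<and> r powr e \<le> max 1 (k powr e)"
  proof (cases "e \<ge> 0")
    case True
    have "1 \<le> r powr e" using r(1) True by (rule ge_one_powr_ge_zero)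
    moreover have "r powr e \<le> k powr e" using True r by (intro powr_mono2) auto
    ultimately show ?thesis by simp
  next
    case False
    have "r powr e \<le> 1 powr e" using False r by (intro powr_mono2') auto
    moreover have "k powr e \<le> r powr e" using False r by (intro powr_mono2') auto
    ultimately show ?thesis by simp
  qed
  then show "u powr e * min 1 (k powr e) \<le> z powr e" and "z powr e \<le> u powr e * max 1 (k powr e)"
    unfolding z_eq using u by (auto intro: mult_left_mono)
qed

lemma Hker_ge:
  fixes x y X Y Z :: real
  assumes x: "x > 0" and y: "y > 0" and X: "0 \<le> X" "X \<le> x powr mu" and Y: "0 \<le> Y" "Y \<le> y powr nu"
    and Z: "0 \<le> Z" "Z \<le> (x + y) powr (- lam)"
  shows "X * Y * Z \<le> Hker lam mu nu x y"
proof -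
  have "X * Y * Z \<le> x powr mu * y powr nu * (x + y) powr (- lam)"
    using X Y Z by (intro mult_mono) auto
  then show ?thesis by (simp add: Hker_def powr_minus divide_inverse)
qed

lemma wint_indicator_le:
  fixes u v p \<theta> M :: real
  assumes u: "u > 0" and p: "p > 0" and M: "\<And>x. x \<in> {u..v} \<Longrightarrow> x powr \<theta> \<le> M" and uv: "u \<le> v"
  shows "wint p \<theta> (indicator {u..v}) \<le> ennreal ((v - u) * M)"
proof -
  have "u powr \<theta> \<le> M" using M uv by simp
  then have M_nonneg: "M \<ge> 0" using powr_ge_zero[of u \<theta>] by linarith
  have "wint p \<theta> (indicator {u..v}) \<le> (\<integral>\<^sup>+x. ennreal M * indicator {u..v} x \<partial>lborel)"
    unfolding wint_lborel
  proof (intro nn_integral_mono)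
    fix x :: real
    show "ennreal (indicator {0<..} x * (\<bar>indicator {u..v} x :: real\<bar> powr p * x powr \<theta>)) \<le> ennreal M * indicator {u..v} x"
      using M[of x] u p by (cases "x \<in> {u..v}") (auto simp: indicator_def intro: ennreal_leI)
  qed
  also have "\<dots> = ennreal ((v - u) * M)"
    using uv M_nonneg by (simp add: nn_integral_cmult_indicator ennreal_mult' mult.commute)
  finally show ?thesis .
qed

lemma in_Lpw_indicator:
  assumes "u > 0" "p > 0"
  shows "in_Lpw p \<theta> (indicator {u..v})"
proof (cases "u \<le> v")
  case True
  have "x powr \<theta> \<le> max (u powr \<theta>) (v powr \<theta>)" if "x \<in> {u..v}" for x
  proof (cases "\<theta> \<ge> 0")
    case True
    then have "x powr \<theta> \<le> v powr \<theta>" using that assms by (intro powr_mono2) auto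
    then show ?thesis by simp
  next
    case False
    then have "x powr \<theta> \<le> u powr \<theta>" using that assms by (intro powr_mono2') auto
    then show ?thesis by simp
  qed
  from wint_indicator_le[OF assms(1,2) this True] have "wint p \<theta> (indicator {u..v}) < \<infinity>"
    using le_less_trans by fastforce
  moreover have "(\<lambda>x. indicator {0<..} x *\<^sub>R (indicator {u..v} x :: real)) \<in> borel_measurable lebesgue"
    by (intro measurable_completion) measurable
  ultimately show ?thesis by (simp add: in_Lpw_def set_borel_measurable_def)
next
  case False
  then have "indicator {u..v} = (\<lambda>_. 0 :: real)" by auto
  then show ?thesis by (simp add: in_Lpw_def wint_def set_borel_measurable_def)
qed

lemma Hop_indicator_ge:
  assumes u: "u > 0" and y: "y > 0" and c: "c \<ge> 0" and uv: "u \<le> v"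
    and K: "\<And>x. x \<in> {u..v} \<Longrightarrow> c \<le> Hker lam mu nu x y"
    and int: "set_integrable lebesgue {0<..} (\<lambda>x. Hker lam mu nu x y * indicator {u..v} x)"
  shows "c * (v - u) \<le> Hop lam mu nu (indicator {u..v}) y"
proof -
  have "ennreal (c * (v - u)) = (\<integral>\<^sup>+x. ennreal c * indicator {u..v} x \<partial>lborel)"
    using c uv by (simp add: nn_integral_cmult_indicator ennreal_mult)
  also have "\<dots> \<le> (\<integral>\<^sup>+x. ennreal (indicator {0<..} x * (Hker lam mu nu x y * indicator {u..v} x)) \<partial>lborel)"
    using u K by (intro nn_integral_mono) (auto simp: indicator_def intro: ennreal_leI)
  also have "\<dots> = ennreal (Hop lam mu nu (indicator {u..v}) y)"
    by (rule Hop_eq_nn_integral[symmetric]) (use y int in auto)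
  moreover have "Hop lam mu nu (indicator {u..v}) y \<ge> 0"
    using y by (intro Hop_nonneg) auto
  ultimately show ?thesis by simp
qed

lemma wint_ge:
  fixes R :: "real set" and \<phi> F :: "real \<Rightarrow> real" and p \<beta> :: real
  assumes R: "R \<subseteq> {0<..}" and p: "p > 0" and \<phi>: "\<And>y. y \<in> R \<Longrightarrow> 0 \<le> \<phi> y \<and> \<phi> y \<le> \<bar>F y\<bar>"
  shows "(\<integral>\<^sup>+y. ennreal (indicator R y * (\<phi> y powr p * y powr \<beta>)) \<partial>lborel) \<le> wint p \<beta> F"
  unfolding wint_lborel
proof (intro nn_integral_mono ennreal_leI)
  fix y :: real
  show "indicator R y * (\<phi> y powr p * y powr \<beta>) \<le> indicator {0<..} y * (\<bar>F y\<bar> powr p * y powr \<beta>)"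
  proof (cases "y \<in> R")
    case True
    then have "\<phi> y powr p \<le> \<bar>F y\<bar> powr p" using p \<phi> by (intro powr_mono2) auto
    then show ?thesis using True R by (auto intro: mult_right_mono)
  qed simp
qed

lemma H_bounded_wint_le:
  assumes p: "p > 0" and "H_bounded p \<alpha> \<beta> lam mu nu"
  obtains C where "C \<ge> 0" and "\<And>f. in_Lpw p \<alpha> f \<Longrightarrow>
      (\<forall>y>0. set_integrable lebesgue {0<..} (\<lambda>x. Hker lam mu nu x y * f x))
      \<and> in_Lpw p \<beta> (Hop lam mu nu f)
      \<and> enn2real (wint p \<beta> (Hop lam mu nu f)) \<le> C * enn2real (wint p \<alpha> f)"
proof -
  obtain C where C: "\<And>f. in_Lpw p \<alpha> f \<Longrightarrow>
      (\<forall>y>0. set_integrable lebesgue {0<..} (\<lambda>x. Hker lam mu nu x y * f x))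
      \<and> in_Lpw p \<beta> (Hop lam mu nu f) \<and> normw p \<beta> (Hop lam mu nu f) \<le> C * normw p \<alpha> f"
    using assms(2) unfolding H_bounded_def by blast
  have "X \<le> max C 0 powr p * Y" if "X \<ge> 0" "Y \<ge> 0" "X powr (1 / p) \<le> C * Y powr (1 / p)" for X Y
  proof -
    have "X = (X powr (1 / p)) powr p" using that p by (simp add: powr_powr)
    also have "\<dots> \<le> (max C 0 * Y powr (1 / p)) powr p"
    proof (intro powr_mono2)
      have "C * Y powr (1 / p) \<le> max C 0 * Y powr (1 / p)" by (intro mult_right_mono) auto
      then show "X powr (1 / p) \<le> max C 0 * Y powr (1 / p)" using that(3) by linarith
    qed (use p in auto)
    also have "\<dots> = max C 0 powr p * Y" using that p by (simp add: powr_mult powr_powr)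
    finally show ?thesis .
  qed
  with C have "\<And>f. in_Lpw p \<alpha> f \<Longrightarrow>
      (\<forall>y>0. set_integrable lebesgue {0<..} (\<lambda>x. Hker lam mu nu x y * f x))
      \<and> in_Lpw p \<beta> (Hop lam mu nu f)
      \<and> enn2real (wint p \<beta> (Hop lam mu nu f)) \<le> max C 0 powr p * enn2real (wint p \<alpha> f)"
    by (simp add: normw_def)
  then show ?thesis using that[of "max C 0 powr p"] by simp
qed

lemma powr_bounded_imp_exponent_zero:
  fixes D K e :: real
  assumes D: "D > 0" and bound: "\<And>t. t > 0 \<Longrightarrow> D * t powr e \<le> K"
  shows "e = 0"
proof (rule ccontr)
  assume e: "e \<noteq> 0"
  define t where "t = ((\<bar>K\<bar> + 1) / D) powr (1 / e)"
  have "t > 0" using D by (simp add: t_def)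
  moreover have "D * t powr e = \<bar>K\<bar> + 1" using D e by (simp add: t_def powr_powr)
  ultimately show False using bound[of t] by simp
qed

lemma Hop_dyadic_ge:
  assumes t: "t > 0" and y: "y \<in> {t..2 * t}"
    and int: "set_integrable lebesgue {0<..} (\<lambda>x. Hker lam mu nu x y * indicator {t..2 * t} x)"
  shows "min 1 (2 powr mu) * min 1 (2 powr nu) * (2 powr (- lam) * min 1 (2 powr (- lam))) *
      t powr (mu + nu - lam + 1) \<le> Hop lam mu nu (indicator {t..2 * t}) y"
proof -
  define c where "c = min 1 (2 powr mu) * min 1 (2 powr nu) * (2 powr (- lam) * min 1 (2 powr (- lam)))"
  have c: "c > 0" by (simp add: c_def)
  have "c * t powr (mu + nu - lam) \<le> Hker lam mu nu x y" if x: "x \<in> {t..2 * t}" for x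
  proof -
    have x_pos: "x > 0" and y_pos: "y > 0" using x y t by auto
    have "t powr (mu + nu - lam) = t powr mu * t powr nu * t powr (- lam)"
      by (simp add: powr_add[symmetric])
    moreover have "(2 * t) powr (- lam) = 2 powr (- lam) * t powr (- lam)"
      using t by (simp add: powr_mult)
    ultimately have "c * t powr (mu + nu - lam)
        = (t powr mu * min 1 (2 powr mu)) * (t powr nu * min 1 (2 powr nu)) * ((2 * t) powr (- lam) * min 1 (2 powr (- lam)))"
      unfolding c_def by (simp only: mult_ac)
    also have "\<dots> \<le> Hker lam mu nu x y"
    proof (rule Hker_ge[OF x_pos y_pos])
      show "t powr mu * min 1 (2 powr mu) \<le> x powr mu"
        using powr_bounds_of_ratio(1)[OF t _, of 2 x mu] x by simp
      show "t powr nu * min 1 (2 powr nu) \<le> y powr nu"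
        using powr_bounds_of_ratio(1)[OF t _, of 2 y nu] y by simp
      show "(2 * t) powr (- lam) * min 1 (2 powr (- lam)) \<le> (x + y) powr (- lam)"
        using powr_bounds_of_ratio(1)[of "2 * t" 2 "x + y" "- lam"] x y t by simp
    qed simp_all
    finally show ?thesis .
  qed
  then have "c * t powr (mu + nu - lam) * (2 * t - t) \<le> Hop lam mu nu (indicator {t..2 * t}) y"
    using t y c int by (intro Hop_indicator_ge) auto
  then show ?thesis
    using t by (simp add: c_def powr_add)
qed

lemma wint_ge_dyadic:
  fixes F :: "real \<Rightarrow> real" and p \<beta> t L :: real
  assumes p: "p > 0" and t: "t > 0" and L: "L \<ge> 0" and F: "\<And>y. y \<in> {t..2 * t} \<Longrightarrow> L \<le> \<bar>F y\<bar>"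
  shows "ennreal (L powr p * (t powr \<beta> * min 1 (2 powr \<beta>)) * t) \<le> wint p \<beta> F"
proof -
  have "ennreal (L powr p * (t powr \<beta> * min 1 (2 powr \<beta>)) * t)
      = (\<integral>\<^sup>+y. ennreal (L powr p * (t powr \<beta> * min 1 (2 powr \<beta>))) * indicator {t..2 * t} y \<partial>lborel)"
    using t by (simp add: nn_integral_cmult_indicator ennreal_mult)
  also have "\<dots> \<le> (\<integral>\<^sup>+y. ennreal (indicator {t..2 * t} y * (L powr p * y powr \<beta>)) \<partial>lborel)"
  proof (intro nn_integral_mono)
    fix y
    show "ennreal (L powr p * (t powr \<beta> * min 1 (2 powr \<beta>))) * indicator {t..2 * t} y
        \<le> ennreal (indicator {t..2 * t} y * (L powr p * y powr \<beta>))"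
    proof (cases "y \<in> {t..2 * t}")
      case True
      then have "t powr \<beta> * min 1 (2 powr \<beta>) \<le> y powr \<beta>"
        using powr_bounds_of_ratio(1)[OF t, of 2 y \<beta>] by simp
      then have "L powr p * (t powr \<beta> * min 1 (2 powr \<beta>)) \<le> L powr p * y powr \<beta>"
        by (rule mult_left_mono) simp
      then show ?thesis using True by (simp add: ennreal_leI)
    qed simp
  qed
  also have "\<dots> \<le> wint p \<beta> F"
    using t L F by (intro wint_ge[OF _ p]) auto
  finally show ?thesis .
qed

lemma H_bounded_imp_lam:
  assumes p: "p \<ge> 1" and bounded: "H_bounded p \<alpha> \<beta> lam mu nu"
  shows "lam = mu + nu + 1 + (\<beta> - \<alpha>) / p"
proof -
  have p_pos: "p > 0" using p by simp
  obtain C where C: "C \<ge> 0" and HC: "\<And>f. in_Lpw p \<alpha> f \<Longrightarrow>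
      (\<forall>y>0. set_integrable lebesgue {0<..} (\<lambda>x. Hker lam mu nu x y * f x))
      \<and> in_Lpw p \<beta> (Hop lam mu nu f)
      \<and> enn2real (wint p \<beta> (Hop lam mu nu f)) \<le> C * enn2real (wint p \<alpha> f)"
    using H_bounded_wint_le[OF p_pos bounded] by blast
  define c where "c = min 1 (2 powr mu) * min 1 (2 powr nu) * (2 powr (- lam) * min 1 (2 powr (- lam)))"
  define g where "g = mu + nu - lam + 1"
  define M where "M = max 1 (2 powr \<alpha>)"
  define m where "m = min 1 (2 powr \<beta>)"
  have c: "c > 0" and m: "m > 0" and M: "M > 0" by (simp_all add: c_def m_def M_def)
  \<comment> \<open>for \<open>f = indicator {t..2 t}\<close>, \<open>||f||^p\<close> is of order \<open>t^(alpha + 1)\<close>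
    while \<open>||H f||^p\<close> is at least of order \<open>t^(g p + beta + 1)\<close>\<close>
  have test: "(c * t powr g) powr p * (t powr \<beta> * m) * t \<le> C * (t * (t powr \<alpha> * M))"
    if t: "t > 0" for t
  proof -
    define f :: "real \<Rightarrow> real" where "f = indicator {t..2 * t}"
    have "in_Lpw p \<alpha> f" unfolding f_def by (rule in_Lpw_indicator[OF t p_pos])
    note Hf = HC[OF this]
    have "wint p \<alpha> f \<le> ennreal ((2 * t - t) * (t powr \<alpha> * M))"
      unfolding f_def using t p_pos powr_bounds_of_ratio(2)[OF t, of 2 _ \<alpha>]
      by (intro wint_indicator_le) (auto simp: M_def)
    then have wint_f: "enn2real (wint p \<alpha> f) \<le> t * (t powr \<alpha> * M)"
      using t M by (intro enn2real_leI) auto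
    have "c * t powr g \<le> \<bar>Hop lam mu nu f y\<bar>" if y: "y \<in> {t..2 * t}" for y
    proof -
      have "set_integrable lebesgue {0<..} (\<lambda>x. Hker lam mu nu x y * indicator {t..2 * t} x)"
        using Hf y t by (simp add: f_def)
      from Hop_dyadic_ge[OF t y this] show ?thesis
        by (simp add: c_def g_def f_def)
    qed
    then have "ennreal ((c * t powr g) powr p * (t powr \<beta> * m) * t) \<le> wint p \<beta> (Hop lam mu nu f)"
      unfolding m_def using c t by (intro wint_ge_dyadic[OF p_pos t]) auto
    then have "(c * t powr g) powr p * (t powr \<beta> * m) * t \<le> enn2real (wint p \<beta> (Hop lam mu nu f))"
      using Hf by (intro ennreal_le_imp_le_enn2real) (auto simp: in_Lpw_def)
    also have "\<dots> \<le> C * enn2real (wint p \<alpha> f)"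
      using Hf by blast
    also have "\<dots> \<le> C * (t * (t powr \<alpha> * M))"
      using wint_f C by (rule mult_left_mono)
    finally show ?thesis .
  qed
  have "c powr p * m * t powr (p * g + \<beta> - \<alpha>) \<le> C * M" if t: "t > 0" for t
  proof -
    have "(c * t powr g) powr p = c powr p * t powr (g * p)"
      using t c by (simp add: powr_mult powr_powr)
    moreover have "t powr (g * p) * t powr \<beta> = t powr (p * g + \<beta> - \<alpha>) * t powr \<alpha>"
      unfolding powr_add[symmetric] by (simp add: algebra_simps)
    ultimately have "(c powr p * m * t powr (p * g + \<beta> - \<alpha>)) * (t * t powr \<alpha>)
        = (c * t powr g) powr p * (t powr \<beta> * m) * t"
      by (simp add: mult_ac)
    also have "\<dots> \<le> C * (t * (t powr \<alpha> * M))"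
      by (rule test[OF t])
    also have "\<dots> = (C * M) * (t * t powr \<alpha>)"
      by (simp add: mult_ac)
    finally have "(c powr p * m * t powr (p * g + \<beta> - \<alpha>)) * (t * t powr \<alpha>) \<le> (C * M) * (t * t powr \<alpha>)" .
    then show ?thesis
      by (rule mult_right_le_imp_le) (use t in simp)
  qed
  then have "p * g + \<beta> - \<alpha> = 0"
    using c m by (intro powr_bounded_imp_exponent_zero[of "c powr p * m"]) auto
  then show ?thesis
    using p_pos by (simp add: g_def field_simps)
qed

lemma nn_integral_inverse_interval:
  fixes u v :: real
  assumes u: "u > 0" and uv: "u \<le> v"
  shows "(\<integral>\<^sup>+y. ennreal (indicator {u..v} y * y powr -1) \<partial>lborel) = ennreal (ln v - ln u)"
proof (rule nn_integral_has_integral_lebesgue)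
  have "((\<lambda>y. 1 / y) has_integral (ln v - ln u)) {u..v}"
    using u by (intro fundamental_theorem_of_calculus[OF uv])
      (auto intro!: derivative_eq_intros simp flip: has_real_derivative_iff_has_vector_derivative)
  then show "((\<lambda>y. y powr -1) has_integral (ln v - ln u)) {u..v}"
    by (rule has_integral_eq[rotated]) (use u in \<open>auto simp: powr_minus divide_inverse\<close>)
qed simp

lemma ennreal_eq_top_of_nat_le:
  fixes X :: ennreal
  assumes "\<And>n::nat. of_nat n \<le> X"
  shows "X = \<infinity>"
proof -
  have "top = (SUP n. of_nat n :: ennreal)" by (simp add: ennreal_SUP_of_nat_eq_top)
  also have "\<dots> \<le> X" by (rule SUP_least) (rule assms)
  finally show ?thesis by (simp add: top_unique)
qed

lemma nn_integral_powr_at_0_eq_top: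
  fixes s :: real
  assumes s: "s \<le> -1"
  shows "(\<integral>\<^sup>+y. ennreal (indicator {0<..1} y * y powr s) \<partial>lborel) = \<infinity>"
proof (rule ennreal_eq_top_of_nat_le)
  fix n :: nat
  have "of_nat n = (\<integral>\<^sup>+y. ennreal (indicator {exp (- real n)..1} y * y powr -1) \<partial>lborel)"
    by (subst nn_integral_inverse_interval) (auto simp: ennreal_of_nat_eq_real_of_nat)
  also have "\<dots> \<le> (\<integral>\<^sup>+y. ennreal (indicator {0<..1} y * y powr s) \<partial>lborel)"
  proof (intro nn_integral_mono ennreal_leI)
    fix y :: real
    show "indicator {exp (- real n)..1} y * y powr -1 \<le> indicator {0<..1} y * y powr s"
    proof (cases "y \<in> {exp (- real n)..1}")
      case True
      then have "0 < y" "y \<le> 1" using exp_gt_zero[of "- real n"] by (auto simp del: exp_gt_zero)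
      then have "y powr -1 \<le> y powr s" using s by (intro powr_mono') auto
      then show ?thesis using True \<open>0 < y\<close> by simp
    qed (simp add: indicator_def)
  qed
  finally show "of_nat n \<le> (\<integral>\<^sup>+y. ennreal (indicator {0<..1} y * y powr s) \<partial>lborel)" .
qed

lemma nn_integral_powr_at_top_eq_top:
  fixes s :: real
  assumes s: "s \<ge> -1"
  shows "(\<integral>\<^sup>+y. ennreal (indicator {1..} y * y powr s) \<partial>lborel) = \<infinity>"
proof (rule ennreal_eq_top_of_nat_le)
  fix n :: nat
  have "of_nat n = (\<integral>\<^sup>+y. ennreal (indicator {1..exp n} y * y powr -1) \<partial>lborel)"
    by (subst nn_integral_inverse_interval) (auto simp: ennreal_of_nat_eq_real_of_nat)
  also have "\<dots> \<le> (\<integral>\<^sup>+y. ennreal (indicator {1..} y * y powr s) \<partial>lborel)"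
  proof (intro nn_integral_mono ennreal_leI)
    fix y :: real
    show "indicator {1..exp n} y * y powr -1 \<le> indicator {1..} y * y powr s"
    proof (cases "y \<in> {1..exp n}")
      case True
      then have "y powr -1 \<le> y powr s" using s by (intro powr_mono) auto
      then show ?thesis using True by simp
    qed (simp add: indicator_def)
  qed
  finally show "of_nat n \<le> (\<integral>\<^sup>+y. ennreal (indicator {1..} y * y powr s) \<partial>lborel)" .
qed

lemma Hop_unit_indicator_ge:
  assumes y: "y > 0"
    and int: "set_integrable lebesgue {0<..} (\<lambda>x. Hker lam mu nu x y * indicator {1..2} x)"
  shows "min 1 (2 powr mu) * min 1 (3 powr (- lam)) * (y powr nu * max 1 y powr (- lam))
      \<le> Hop lam mu nu (indicator {1..2}) y"
proof -
  have "min 1 (2 powr mu) * y powr nu * (max 1 y powr (- lam) * min 1 (3 powr (- lam))) \<le> Hker lam mu nu x y"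
    if x: "x \<in> {1..2}" for x
  proof (rule Hker_ge)
    show "min 1 (2 powr mu) \<le> x powr mu"
      using powr_bounds_of_ratio(1)[of 1 2 x mu] x by simp
    show "max 1 y powr (- lam) * min 1 (3 powr (- lam)) \<le> (x + y) powr (- lam)"
      using powr_bounds_of_ratio(1)[of "max 1 y" 3 "x + y" "- lam"] x y by (simp add: max_def)
  qed (use x y in auto)
  then have "min 1 (2 powr mu) * y powr nu * (max 1 y powr (- lam) * min 1 (3 powr (- lam))) * (2 - 1)
      \<le> Hop lam mu nu (indicator {1..2}) y"
    using y int by (intro Hop_indicator_ge) auto
  then show ?thesis by (simp add: mult_ac)
qed

lemma wint_eq_top_of_powr_ge:
  fixes R :: "real set" and F :: "real \<Rightarrow> real" and p \<beta> c e :: real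
  assumes R: "R \<subseteq> {0<..}" and [measurable]: "R \<in> sets borel" and p: "p > 0" and c: "c > 0"
    and F: "\<And>y. y \<in> R \<Longrightarrow> c * y powr e \<le> \<bar>F y\<bar>"
    and diverge: "(\<integral>\<^sup>+y. ennreal (indicator R y * y powr (e * p + \<beta>)) \<partial>lborel) = \<infinity>"
  shows "wint p \<beta> F = \<infinity>"
proof -
  have "(\<integral>\<^sup>+y. ennreal (indicator R y * ((c * y powr e) powr p * y powr \<beta>)) \<partial>lborel)
      = (\<integral>\<^sup>+y. ennreal (c powr p) * ennreal (indicator R y * y powr (e * p + \<beta>)) \<partial>lborel)"
    using R c by (intro nn_integral_cong)
      (auto simp: indicator_def ennreal_mult'[symmetric] powr_mult powr_powr powr_add)
  also have "\<dots> = \<infinity>"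
    using c diverge by (subst nn_integral_cmult) (auto simp: ennreal_mult_top)
  finally have "\<infinity> \<le> wint p \<beta> F"
    using wint_ge[OF R p, of "\<lambda>y. c * y powr e" F \<beta>] F c by fastforce
  then show ?thesis by (simp add: top_unique)
qed

lemma H_bounded_imp_exponents:
  assumes p: "p \<ge> 1" and bounded: "H_bounded p \<alpha> \<beta> lam mu nu"
  shows "- p * nu < \<beta> + 1" and "\<alpha> + 1 < p * (mu + 1)"
proof -
  have p_pos: "p > 0" using p by simp
  have lam: "lam = mu + nu + 1 + (\<beta> - \<alpha>) / p"
    by (rule H_bounded_imp_lam[OF p bounded])
  define f :: "real \<Rightarrow> real" where "f = indicator {1..2}"
  define c where "c = min 1 (2 powr mu) * min 1 (3 powr (- lam))"
  have c: "c > 0" by (simp add: c_def)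
  obtain C where "\<And>f. in_Lpw p \<alpha> f \<Longrightarrow>
      (\<forall>y>0. set_integrable lebesgue {0<..} (\<lambda>x. Hker lam mu nu x y * f x))
      \<and> in_Lpw p \<beta> (Hop lam mu nu f)
      \<and> enn2real (wint p \<beta> (Hop lam mu nu f)) \<le> C * enn2real (wint p \<alpha> f)"
    using H_bounded_wint_le[OF p_pos bounded] by blast
  from this[of f] have int: "\<forall>y>0. set_integrable lebesgue {0<..} (\<lambda>x. Hker lam mu nu x y * f x)"
    and finite: "wint p \<beta> (Hop lam mu nu f) \<noteq> \<infinity>"
    using in_Lpw_indicator[of 1 p \<alpha> 2] p_pos by (auto simp: f_def in_Lpw_def)
  \<comment> \<open>\<open>H f\<close> behaves like \<open>y^nu\<close> near \<open>0\<close> and like \<open>y^(nu - lam)\<close> near infinity\<close>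
  have Hf: "c * (y powr nu * max 1 y powr (- lam)) \<le> \<bar>Hop lam mu nu f y\<bar>" if "y > 0" for y
    using Hop_unit_indicator_ge[OF that, of lam mu nu] int that by (auto simp: f_def c_def)
  show "- p * nu < \<beta> + 1"
  proof (rule ccontr)
    assume "\<not> - p * nu < \<beta> + 1"
    then have "nu * p + \<beta> \<le> -1" by (simp add: algebra_simps)
    moreover have "c * y powr nu \<le> \<bar>Hop lam mu nu f y\<bar>" if "y \<in> {0<..1}" for y
      using Hf[of y] that max_absorb1[of 1 y] by simp
    ultimately have "wint p \<beta> (Hop lam mu nu f) = \<infinity>"
      using p_pos c nn_integral_powr_at_0_eq_top
      by (intro wint_eq_top_of_powr_ge[where R = "{0<..1}" and c = c and e = nu]) auto
    with finite show False by simp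
  qed
  show "\<alpha> + 1 < p * (mu + 1)"
  proof (rule ccontr)
    assume "\<not> \<alpha> + 1 < p * (mu + 1)"
    moreover have "(nu - lam) * p + \<beta> = \<alpha> - p * (mu + 1)"
      using p_pos unfolding lam by (simp add: field_simps)
    ultimately have "(nu - lam) * p + \<beta> \<ge> -1" by simp
    moreover have "c * y powr (nu - lam) \<le> \<bar>Hop lam mu nu f y\<bar>" if "y \<in> {1..}" for y
      using Hf[of y] that max_absorb2[of 1 y] by (simp add: powr_diff powr_minus divide_inverse)
    ultimately have "wint p \<beta> (Hop lam mu nu f) = \<infinity>"
      using p_pos c nn_integral_powr_at_top_eq_top
      by (intro wint_eq_top_of_powr_ge[where R = "{1..}" and c = c and e = "nu - lam"]) auto
    with finite show False by simp
  qed
qed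

section \<open>The operator norm\<close>

definition Beta_trunc :: "real \<Rightarrow> real \<Rightarrow> real \<Rightarrow> real" where
  "Beta_trunc a b M =
     enn2real (\<integral>\<^sup>+\<tau>. ennreal (\<tau> powr (a - 1) / (1 + \<tau>) powr (a + b)) * indicator {1/M..M} \<tau> \<partial>lborel)"

lemma nn_integral_Beta_trunc:
  assumes a: "a > 0" and b: "b > 0" and M: "M > 0"
  shows "(\<integral>\<^sup>+\<tau>. ennreal (\<tau> powr (a - 1) / (1 + \<tau>) powr (a + b)) * indicator {1/M..M} \<tau> \<partial>lborel)
      = ennreal (Beta_trunc a b M)"
proof -
  have "(\<integral>\<^sup>+\<tau>. ennreal (\<tau> powr (a - 1) / (1 + \<tau>) powr (a + b)) * indicator {1/M..M} \<tau> \<partial>lborel)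
      \<le> (\<integral>\<^sup>+\<tau>. ennreal (\<tau> powr (a - 1) / (\<tau> + 1) powr (a + b)) * indicator {0<..} \<tau> \<partial>lborel)"
    using M by (intro nn_integral_mono) (auto simp: indicator_def add.commute intro: less_le_trans[of 0 "1/M"])
  also have "\<dots> = ennreal (Beta a b)"
    using nn_integral_Beta_shifted[of 1 a "a + b"] a b by simp
  finally show ?thesis
    unfolding Beta_trunc_def by (simp add: top.not_eq_extremum le_less_trans)
qed

lemma Beta_trunc_approx:
  assumes a: "a > 0" and b: "b > 0" and q: "q < Beta a b"
  obtains M where "M \<ge> 1" and "q < Beta_trunc a b M"
proof -
  define A where "A n = {1 / (real n + 1)..real n + 1}" for n :: nat
  have "incseq A"
    by (auto simp: incseq_def A_def frac_le intro: order_trans[rotated])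
  moreover have "(\<Union>n. A n) = {0<..}"
  proof (intro equalityI subsetI)
    fix x :: real assume "x \<in> {0<..}"
    moreover obtain n :: nat where "max x (1 / x) \<le> real n" using real_arch_simple by blast
    ultimately have "x \<in> A n" by (auto simp: A_def field_simps)
    then show "x \<in> (\<Union>n. A n)" by blast
  next
    fix x :: real assume "x \<in> (\<Union>n. A n)"
    then obtain n :: nat where "1 / (real n + 1) \<le> x" by (auto simp: A_def)
    moreover have "0 < 1 / (real n + 1)" by simp
    ultimately show "x \<in> {0<..}" unfolding greaterThan_iff by linarith
  qed
  ultimately have "(SUP n. \<integral>\<^sup>+\<tau>. ennreal (\<tau> powr (a - 1) / (1 + \<tau>) powr (a + b)) * indicator (A n) \<tau> \<partial>lborel)
      = (\<integral>\<^sup>+\<tau>. ennreal (\<tau> powr (a - 1) / (\<tau> + 1) powr (a + b)) * indicator {0<..} \<tau> \<partial>lborel)"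
    using nn_integral_indicator_incseq_SUP[of A lborel] by (simp add: A_def add.commute)
  also have "\<dots> = ennreal (Beta a b)"
    using nn_integral_Beta_shifted[of 1 a "a + b"] a b by simp
  finally have "ennreal q < (SUP n. ennreal (Beta_trunc a b (real n + 1)))"
    using q a b by (simp add: A_def nn_integral_Beta_trunc Beta_real_pos ennreal_lessI)
  then obtain n :: nat where "ennreal q < ennreal (Beta_trunc a b (real n + 1))"
    by (auto simp: less_SUP_iff)
  then have "q < Beta_trunc a b (real n + 1)"
    by (meson ennreal_leI not_le)
  then show ?thesis using that[of "real n + 1"] by simp
qed

lemma nn_integral_powr_tail:
  fixes c e :: real
  assumes c: "c > 0" and e: "e < -1"
  shows "(\<integral>\<^sup>+x. ennreal (indicator {c..} x * x powr e) \<partial>lborel) = ennreal (- (c powr (e + 1)) / (e + 1))"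
  by (rule nn_integral_has_integral_lebesgue) (use has_integral_powr_to_inf[OF e c] in auto)

lemma wint_power_tail:
  fixes p s \<epsilon> \<alpha> :: real
  assumes p: "p > 0" and e: "\<epsilon> > 0" and sp: "\<alpha> + 1 = s * p"
  shows "wint p \<alpha> (\<lambda>x. indicator {1..} x * x powr (- s - \<epsilon>)) = ennreal (1 / (p * \<epsilon>))"
proof -
  have "wint p \<alpha> (\<lambda>x. indicator {1..} x * x powr (- s - \<epsilon>))
      = (\<integral>\<^sup>+x. ennreal (indicator {1..} x * x powr (- 1 - p * \<epsilon>)) \<partial>lborel)"
    unfolding wint_lborel
  proof (intro nn_integral_cong)
    fix x :: real
    have "(- s - \<epsilon>) * p + \<alpha> = - 1 - p * \<epsilon>"
      using sp by (simp add: algebra_simps)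
    then have "x powr ((- s - \<epsilon>) * p) * x powr \<alpha> = x powr (- 1 - p * \<epsilon>)"
      by (simp only: powr_add[symmetric])
    then show "ennreal (indicator {0<..} x * (\<bar>indicator {1..} x * x powr (- s - \<epsilon>)\<bar> powr p * x powr \<alpha>))
        = ennreal (indicator {1..} x * x powr (- 1 - p * \<epsilon>))"
      using p by (auto simp: indicator_def powr_powr)
  qed
  also have "\<dots> = ennreal (1 / (p * \<epsilon>))"
    using nn_integral_powr_tail[of 1 "- 1 - p * \<epsilon>"] p e by simp
  finally show ?thesis .
qed

lemma nn_integral_Hker_truncated:
  fixes y M a b :: real
  assumes y: "y > 0" and M: "M > 0"
  shows "(\<integral>\<^sup>+x. ennreal (Hker (a + b) mu nu x y * x powr (a - 1 - mu)) * indicator {y/M..y*M} x \<partial>lborel)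
       = ennreal (y powr (nu - b)) *
         (\<integral>\<^sup>+\<tau>. ennreal (\<tau> powr (a - 1) / (1 + \<tau>) powr (a + b)) * indicator {1/M..M} \<tau> \<partial>lborel)"
proof -
  have ind: "indicator {y/M..y*M} (y * \<tau>) = (indicator {1/M..M} \<tau> :: ennreal)" for \<tau>
    using y M by (auto simp: indicator_def field_simps)
  have integrand: "ennreal (Hker (a + b) mu nu (y * \<tau>) y * (y * \<tau>) powr (a - 1 - mu)) * indicator {y/M..y*M} (y * \<tau>)
      = ennreal (y powr (nu - b - 1)) * (ennreal (\<tau> powr (a - 1) / (1 + \<tau>) powr (a + b)) * indicator {1/M..M} \<tau>)"
    for \<tau> :: real
  proof (cases "\<tau> \<in> {1/M..M}")
    case True
    then have \<tau>: "\<tau> > 0" using M by (auto intro: less_le_trans[of 0 "1/M"])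
    have "y * \<tau> + y = y * (1 + \<tau>)" by (simp add: algebra_simps)
    then have "(y * \<tau> + y) powr (a + b) = y powr (a + b) * (1 + \<tau>) powr (a + b)"
      using y \<tau> by (simp add: powr_mult)
    then have "Hker (a + b) mu nu (y * \<tau>) y * (y * \<tau>) powr (a - 1 - mu)
        = (y powr mu * y powr nu * y powr (a - 1 - mu) / y powr (a + b)) *
          (\<tau> powr mu * \<tau> powr (a - 1 - mu) / (1 + \<tau>) powr (a + b))"
      using y \<tau> by (simp add: Hker_def powr_mult field_simps)
    also have "y powr mu * y powr nu * y powr (a - 1 - mu) / y powr (a + b) = y powr (nu - b - 1)"
      using y by (simp add: powr_add[symmetric] powr_diff[symmetric] algebra_simps)
    also have "\<tau> powr mu * \<tau> powr (a - 1 - mu) = \<tau> powr (a - 1)"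
      using \<tau> by (simp add: powr_add[symmetric])
    finally show ?thesis
      using True y by (simp add: ind ennreal_mult'[symmetric])
  next
    case False
    then show ?thesis by (simp add: ind)
  qed
  have "(\<integral>\<^sup>+x. ennreal (Hker (a + b) mu nu x y * x powr (a - 1 - mu)) * indicator {y/M..y*M} x \<partial>lborel)
      = ennreal y * (\<integral>\<^sup>+\<tau>. ennreal (Hker (a + b) mu nu (y * \<tau>) y * (y * \<tau>) powr (a - 1 - mu)) *
          indicator {y/M..y*M} (y * \<tau>) \<partial>lborel)"
    using nn_integral_real_affine[of "\<lambda>x. ennreal (Hker (a + b) mu nu x y * x powr (a - 1 - mu)) *
        indicator {y/M..y*M} x" y 0] y by simp
  also have "\<dots> = ennreal y * (\<integral>\<^sup>+\<tau>. ennreal (y powr (nu - b - 1)) *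
      (ennreal (\<tau> powr (a - 1) / (1 + \<tau>) powr (a + b)) * indicator {1/M..M} \<tau>) \<partial>lborel)"
    by (simp only: integrand)
  also have "\<dots> = ennreal (y * y powr (nu - b - 1)) *
      (\<integral>\<^sup>+\<tau>. ennreal (\<tau> powr (a - 1) / (1 + \<tau>) powr (a + b)) * indicator {1/M..M} \<tau> \<partial>lborel)"
    using y by (subst nn_integral_cmult) (auto simp: ennreal_mult' mult.assoc)
  also have "y * y powr (nu - b - 1) = y powr (nu - b)"
    using y powr_add[of y 1 "nu - b - 1"] by simp
  finally show ?thesis .
qed

lemma Hop_power_tail_ge:
  fixes M y \<epsilon> a b :: real
  assumes M: "M \<ge> 1" and y: "y \<ge> M" and e: "\<epsilon> > 0" and a: "a > 0" and b: "b > 0"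
    and int: "set_integrable lebesgue {0<..}
      (\<lambda>x. Hker (a + b) mu nu x y * (indicator {1..} x * x powr (a - 1 - mu - \<epsilon>)))"
  shows "M powr (- \<epsilon>) * Beta_trunc a b M * y powr (nu - b - \<epsilon>)
      \<le> Hop (a + b) mu nu (\<lambda>x. indicator {1..} x * x powr (a - 1 - mu - \<epsilon>)) y"
proof -
  define f where "f = (\<lambda>x. indicator {1..} x * x powr (a - 1 - mu - \<epsilon>) :: real)"
  note int = int[folded f_def]
  have y_pos: "y > 0" using M y by simp
  \<comment> \<open>on \<open>[y/M, y M] \<subseteq> [1, \<infinity>)\<close> the test function is at least \<open>(y M)^(-eps) x^(a - 1 - mu)\<close>\<close>
  have "ennreal ((y * M) powr (- \<epsilon>)) * (ennreal (y powr (nu - b)) * ennreal (Beta_trunc a b M))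
      = (\<integral>\<^sup>+x. ennreal ((y * M) powr (- \<epsilon>)) *
          (ennreal (Hker (a + b) mu nu x y * x powr (a - 1 - mu)) * indicator {y/M..y*M} x) \<partial>lborel)"
    using nn_integral_Hker_truncated[OF y_pos, of M a b mu nu] nn_integral_Beta_trunc[OF a b] M
    by (subst nn_integral_cmult) auto
  also have "\<dots> \<le> (\<integral>\<^sup>+x. ennreal (indicator {0<..} x * (Hker (a + b) mu nu x y * f x)) \<partial>lborel)"
  proof (intro nn_integral_mono)
    fix x :: real
    show "ennreal ((y * M) powr (- \<epsilon>)) * (ennreal (Hker (a + b) mu nu x y * x powr (a - 1 - mu)) * indicator {y/M..y*M} x)
        \<le> ennreal (indicator {0<..} x * (Hker (a + b) mu nu x y * f x))"
    proof (cases "x \<in> {y/M..y*M}")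
      case True
      moreover have "y / M \<ge> 1" using M y by simp
      ultimately have x: "x \<ge> 1" "x \<le> y * M" by auto
      then have "(y * M) powr (- \<epsilon>) \<le> x powr (- \<epsilon>)" using e by (intro powr_mono2') auto
      then have "(y * M) powr (- \<epsilon>) * (Hker (a + b) mu nu x y * x powr (a - 1 - mu))
          \<le> x powr (- \<epsilon>) * (Hker (a + b) mu nu x y * x powr (a - 1 - mu))"
        using x y_pos by (intro mult_right_mono) (auto simp: Hker_nonneg)
      also have "\<dots> = Hker (a + b) mu nu x y * f x"
        using x by (simp add: f_def powr_add[symmetric])
      finally show ?thesis
        using True x y_pos M by (simp add: ennreal_mult'[symmetric] ennreal_leI)
    qed simp
  qed
  also have "\<dots> = ennreal (Hop (a + b) mu nu f y)"
    by (rule Hop_eq_nn_integral[symmetric]) (use y_pos int in \<open>auto simp: f_def\<close>)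
  finally have "ennreal ((y * M) powr (- \<epsilon>) * (y powr (nu - b) * Beta_trunc a b M)) \<le> ennreal (Hop (a + b) mu nu f y)"
    using y_pos M by (simp add: ennreal_mult'[symmetric])
  moreover have "Hop (a + b) mu nu f y \<ge> 0"
    using y_pos by (intro Hop_nonneg) (auto simp: f_def)
  ultimately have "(y * M) powr (- \<epsilon>) * (y powr (nu - b) * Beta_trunc a b M) \<le> Hop (a + b) mu nu f y"
    by simp
  moreover have "(y * M) powr (- \<epsilon>) * (y powr (nu - b) * Beta_trunc a b M)
      = M powr (- \<epsilon>) * Beta_trunc a b M * y powr (nu - b - \<epsilon>)"
    using y_pos M by (simp add: powr_mult powr_diff powr_minus divide_inverse mult_ac)
  ultimately show ?thesis by (simp add: f_def)
qed

lemma wint_ge_power_tail: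
  fixes F :: "real \<Rightarrow> real" and p \<beta> M c e \<epsilon> :: real
  assumes p: "p > 0" and M: "M > 0" and c: "c \<ge> 0" and e: "\<epsilon> > 0" and exponent: "e * p + \<beta> = - 1 - p * \<epsilon>"
    and F: "\<And>y. y \<ge> M \<Longrightarrow> c * y powr e \<le> \<bar>F y\<bar>"
  shows "ennreal (c powr p * (M powr (- p * \<epsilon>) / (p * \<epsilon>))) \<le> wint p \<beta> F"
proof -
  have "ennreal (c powr p * (M powr (- p * \<epsilon>) / (p * \<epsilon>)))
      = ennreal (c powr p) * (\<integral>\<^sup>+y. ennreal (indicator {M..} y * y powr (- 1 - p * \<epsilon>)) \<partial>lborel)"
  proof -
    have "(\<integral>\<^sup>+y. ennreal (indicator {M..} y * y powr (- 1 - p * \<epsilon>)) \<partial>lborel) = ennreal (M powr (- p * \<epsilon>) / (p * \<epsilon>))"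
      using nn_integral_powr_tail[of M "- 1 - p * \<epsilon>"] M p e by simp
    then show ?thesis by (simp only:) (rule ennreal_mult', simp)
  qed
  also have "\<dots> = (\<integral>\<^sup>+y. ennreal (indicator {M..} y * ((c * y powr e) powr p * y powr \<beta>)) \<partial>lborel)"
  proof -
    have "ennreal (indicator {M..} y * ((c * y powr e) powr p * y powr \<beta>))
        = ennreal (c powr p) * ennreal (indicator {M..} y * y powr (- 1 - p * \<epsilon>))" for y
      using M c exponent by (cases "y \<ge> M")
        (auto simp: ennreal_mult'[symmetric] powr_mult powr_powr powr_add[symmetric])
    then show ?thesis by (simp add: nn_integral_cmult)
  qed
  also have "\<dots> \<le> wint p \<beta> F"
    using M c F by (intro wint_ge[OF _ p]) auto
  finally show ?thesis .
qed

lemma Hop_power_tail_ratio_ge: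
  fixes p a b s t \<alpha> \<beta> \<epsilon> M :: real
  assumes p: "p \<ge> 1" and a: "a > 0" and b: "b > 0"
    and s: "a = mu + 1 - s" and t: "b = nu + t" and sp: "\<alpha> + 1 = s * p" and tp: "\<beta> + 1 = t * p"
    and e: "\<epsilon> > 0" and M: "M \<ge> 1"
  defines "f \<equiv> \<lambda>x. indicator {1..} x * x powr (- s - \<epsilon>)"
  shows "in_Lpw p \<alpha> f" and "normw p \<alpha> f \<noteq> 0"
    and "M powr (- 2 * \<epsilon>) * Beta_trunc a b M \<le> normw p \<beta> (Hop (a + b) mu nu f) / normw p \<alpha> f"
proof -
  have p_pos: "p > 0" using p by simp
  have f_meas[measurable]: "f \<in> borel_measurable lborel" unfolding f_def by measurable
  have wint_f: "wint p \<alpha> f = ennreal (1 / (p * \<epsilon>))"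
    unfolding f_def by (rule wint_power_tail[OF p_pos e sp])
  then have f_finite: "wint p \<alpha> f < \<infinity>" by simp
  show "in_Lpw p \<alpha> f"
    using f_finite unfolding in_Lpw_def set_borel_measurable_def
    by (auto intro: measurable_completion)
  have norm_f: "normw p \<alpha> f = (1 / (p * \<epsilon>)) powr (1 / p)"
    using p_pos e by (simp add: normw_def wint_f)
  then show "normw p \<alpha> f \<noteq> 0" using p_pos e by simp
  define X where "X = M powr (- 2 * \<epsilon>) * Beta_trunc a b M"
  have X: "X \<ge> 0" by (simp add: X_def Beta_trunc_def)
  have "M powr (- \<epsilon>) * Beta_trunc a b M * y powr (nu - b - \<epsilon>) \<le> \<bar>Hop (a + b) mu nu f y\<bar>"
    if y: "y \<ge> M" for y
  proof -
    have "y > 0" using y M by simp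
    then have "set_integrable lebesgue {0<..} (\<lambda>x. Hker (a + b) mu nu x y * f x)"
      by (rule Hop_set_integrable[OF p _ a b s sp f_meas f_finite])
    moreover have "f = (\<lambda>x. indicator {1..} x * x powr (a - 1 - mu - \<epsilon>))"
      unfolding f_def s by (simp add: algebra_simps)
    ultimately show ?thesis
      using Hop_power_tail_ge[OF M y e a b, of mu nu] by simp
  qed
  moreover have "(nu - b - \<epsilon>) * p + \<beta> = - 1 - p * \<epsilon>"
    using t tp by (simp add: algebra_simps)
  ultimately have lower: "ennreal ((M powr (- \<epsilon>) * Beta_trunc a b M) powr p * (M powr (- p * \<epsilon>) / (p * \<epsilon>)))
      \<le> wint p \<beta> (Hop (a + b) mu nu f)"
    using M p_pos e by (intro wint_ge_power_tail) (auto simp: Beta_trunc_def)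
  have lower_eq:  "(M powr (- \<epsilon>) * Beta_trunc a b M) powr p * (M powr (- p * \<epsilon>) / (p * \<epsilon>))
      = X powr p * (1 / (p * \<epsilon>))"
  proof -
    have "(M powr (- \<epsilon>)) powr p * M powr (- p * \<epsilon>) = (M powr (- 2 * \<epsilon>)) powr p"
      using M by (simp add: powr_powr powr_add[symmetric] algebra_simps)
    moreover have "Beta_trunc a b M \<ge> 0" by (simp add: Beta_trunc_def)
    ultimately show ?thesis
      using M by (simp add: X_def powr_mult)
  qed
  have "wint p \<beta> (Hop (a + b) mu nu f) < top"
    using wint_Hop_le_Beta[OF p a b s t sp tp f_meas f_finite] f_finite
    by (simp add: ennreal_mult_less_top le_less_trans)
  from ennreal_le_imp_le_enn2real[OF lower this]
  have "X powr p * (1 / (p * \<epsilon>)) \<le> enn2real (wint p \<beta> (Hop (a + b) mu nu f))"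
    unfolding lower_eq .
  then have "(X powr p * (1 / (p * \<epsilon>))) powr (1 / p) \<le> normw p \<beta> (Hop (a + b) mu nu f)"
    unfolding normw_def using p_pos e by (intro powr_mono2) auto
  also have "(X powr p * (1 / (p * \<epsilon>))) powr (1 / p) = X * normw p \<alpha> f"
    using p_pos e X by (subst powr_mult) (auto simp: powr_powr norm_f)
  finally show "M powr (- 2 * \<epsilon>) * Beta_trunc a b M \<le> normw p \<beta> (Hop (a + b) mu nu f) / normw p \<alpha> f"
    using p_pos e by (simp add: X_def norm_f pos_le_divide_eq)
qed

lemma exists_pos_powr_gt:
  fixes M q J :: real
  assumes M: "M > 0" and q: "q < J"
  obtains \<epsilon> where "\<epsilon> > 0" and "q < M powr (- 2 * \<epsilon>) * J"
proof -
  have "((\<lambda>\<epsilon>. M powr (- 2 * \<epsilon>) * J) \<longlongrightarrow> M powr (- 2 * 0) * J) (at_right 0)"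
    using M by (intro tendsto_intros) auto
  then have "eventually (\<lambda>\<epsilon>. q < M powr (- 2 * \<epsilon>) * J) (at_right 0)"
    using M q by (intro order_tendstoD(1)) auto
  then obtain b where b: "b > 0" and bound: "\<And>\<epsilon>. 0 < \<epsilon> \<Longrightarrow> \<epsilon> < b \<Longrightarrow> q < M powr (- 2 * \<epsilon>) * J"
    unfolding eventually_at_right_field by blast
  have "q < M powr (- 2 * (b / 2)) * J" using b by (intro bound) auto
  with b show ?thesis by (intro that[of "b / 2"]) auto
qed

lemma exists_Hop_ratio_gt:
  fixes p a b s t \<alpha> \<beta> q :: real
  assumes p: "p \<ge> 1" and a: "a > 0" and b: "b > 0"
    and s: "a = mu + 1 - s" and t: "b = nu + t" and sp: "\<alpha> + 1 = s * p" and tp: "\<beta> + 1 = t * p"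
    and q: "q < Beta a b"
  obtains f where "in_Lpw p \<alpha> f" and "normw p \<alpha> f \<noteq> 0"
    and "q < normw p \<beta> (Hop (a + b) mu nu f) / normw p \<alpha> f"
proof -
  obtain M where M: "M \<ge> 1" and "q < Beta_trunc a b M"
    using Beta_trunc_approx[OF a b q] by blast
  then obtain \<epsilon> where e: "\<epsilon> > 0" and "q < M powr (- 2 * \<epsilon>) * Beta_trunc a b M"
    using exists_pos_powr_gt[of M q] by auto
  with Hop_power_tail_ratio_ge[OF p a b s t sp tp e M] show ?thesis
    by (intro that) auto
qed

lemma H_opnorm_eq_Beta:
  fixes p \<alpha> \<beta> lam mu nu :: real
  assumes p: "p \<ge> 1" and lam: "lam = mu + nu + 1 + (\<beta> - \<alpha>) / p"
    and \<alpha>: "\<alpha> + 1 < p * (mu + 1)" and \<beta>: "- p * nu < \<beta> + 1"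
  shows "H_opnorm p \<alpha> \<beta> lam mu nu = Beta (mu + 1 - (\<alpha> + 1) / p) (nu + (\<beta> + 1) / p)"
proof -
  define s t where "s = (\<alpha> + 1) / p" and "t = (\<beta> + 1) / p"
  define a b where "a = mu + 1 - s" and "b = nu + t"
  define S where "S = {normw p \<beta> (Hop lam mu nu f) / normw p \<alpha> f | f. in_Lpw p \<alpha> f \<and> normw p \<alpha> f \<noteq> 0}"
  have p_pos: "p > 0" using p by simp
  have a_pos: "a > 0" and b_pos: "b > 0" and lam_ab: "lam = a + b"
    using lam \<alpha> \<beta> unfolding Beta_exponents_iff[OF p_pos] by (simp_all add: a_def b_def s_def t_def)
  have sp: "\<alpha> + 1 = s * p" and tp: "\<beta> + 1 = t * p"
    using p_pos by (simp_all add: s_def t_def)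
  have upper: "r \<le> Beta a b" if "r \<in> S" for r
  proof -
    obtain f where f: "in_Lpw p \<alpha> f" "normw p \<alpha> f \<noteq> 0"
      and r: "r = normw p \<beta> (Hop lam mu nu f) / normw p \<alpha> f"
      using \<open>r \<in> S\<close> by (auto simp: S_def)
    have "normw p \<alpha> f > 0" using f(2) by (simp add: normw_def less_le)
    moreover have "normw p \<beta> (Hop lam mu nu f) \<le> Beta a b * normw p \<alpha> f"
      using Hop_bounded_Beta(3)[OF p lam \<alpha> \<beta> f(1)] by (simp add: a_def b_def s_def t_def)
    ultimately show ?thesis by (simp add: r divide_le_eq)
  qed
  obtain f where "in_Lpw p \<alpha> f" "normw p \<alpha> f \<noteq> 0"
    using exists_Hop_ratio_gt[OF p a_pos b_pos a_def b_def sp tp, of 0] a_pos b_pos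
    by (auto simp: Beta_real_pos)
  then have S_ne: "S \<noteq> {}"
    by (auto simp: S_def)
  have bdd: "bdd_above S"
    using upper by (auto simp: bdd_above_def)
  have "Sup S = Beta a b"
  proof (rule antisym)
    show "Sup S \<le> Beta a b" by (rule cSup_least[OF S_ne upper])
    show "Beta a b \<le> Sup S"
      unfolding le_cSup_iff[OF S_ne bdd]
    proof (intro allI impI)
      fix q assume "q < Beta a b"
      from exists_Hop_ratio_gt[OF p a_pos b_pos a_def b_def sp tp this]
      show "\<exists>r\<in>S. q < r" unfolding S_def lam_ab by blast
    qed
  qed
  then show ?thesis
    by (simp add: H_opnorm_def S_def[symmetric] a_def b_def s_def t_def)
qed

lemma H_bounded_iff:
  fixes p \<alpha> \<beta> lam mu nu :: real
  assumes p: "p \<ge> 1"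
  shows "H_bounded p \<alpha> \<beta> lam mu nu \<longleftrightarrow>
    lam = mu + nu + 1 + (\<beta> - \<alpha>) / p \<and> - p * nu < \<beta> + 1 \<and> \<alpha> + 1 < p * (mu + 1)"
proof
  assume "H_bounded p \<alpha> \<beta> lam mu nu"
  then show "lam = mu + nu + 1 + (\<beta> - \<alpha>) / p \<and> - p * nu < \<beta> + 1 \<and> \<alpha> + 1 < p * (mu + 1)"
    using H_bounded_imp_lam[OF p] H_bounded_imp_exponents[OF p] by blast
next
  assume "lam = mu + nu + 1 + (\<beta> - \<alpha>) / p \<and> - p * nu < \<beta> + 1 \<and> \<alpha> + 1 < p * (mu + 1)"
  then have lam: "lam = mu + nu + 1 + (\<beta> - \<alpha>) / p" and \<beta>: "- p * nu < \<beta> + 1" and \<alpha>: "\<alpha> + 1 < p * (mu + 1)"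
    by simp_all
  show "H_bounded p \<alpha> \<beta> lam mu nu"
    unfolding H_bounded_def
    using Hop_bounded_Beta[OF p lam \<alpha> \<beta>] by blast
qed

theorem theorem6p6:
  fixes p lam mu nu \<alpha> \<beta> :: real
  assumes "1 \<le> p"
  shows "(H_bounded p \<alpha> \<beta> lam mu nu \<longleftrightarrow>
            lam = mu + nu + 1 + (\<beta> - \<alpha>) / p \<and> - p * nu < \<beta> + 1 \<and> \<beta> + 1 < p * (lam - nu))
       \<and> (H_bounded p \<alpha> \<beta> lam mu nu \<longleftrightarrow>
            lam = mu + nu + 1 + (\<beta> - \<alpha>) / p \<and> p * (mu + 1 - lam) < \<alpha> + 1 \<and> \<alpha> + 1 < p * (mu + 1))
       \<and> (H_bounded p \<alpha> \<beta> lam mu nu \<longrightarrow>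
            H_opnorm p \<alpha> \<beta> lam mu nu = Beta (mu + 1 - (\<alpha> + 1) / p) (nu + (\<beta> + 1) / p))"
proof -
  have "p > 0" using assms by simp
  then have "(\<beta> + 1 < p * (lam - nu) \<longleftrightarrow> \<alpha> + 1 < p * (mu + 1))
      \<and> (p * (mu + 1 - lam) < \<alpha> + 1 \<longleftrightarrow> - p * nu < \<beta> + 1)"
    if "lam = mu + nu + 1 + (\<beta> - \<alpha>) / p"
    using that by (auto simp: field_simps)
  then show ?thesis
    using H_bounded_iff[OF assms] H_opnorm_eq_Beta[OF assms] by blast
qed

end
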